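(* Let $k$ be a field, $Q=(Q_0,Q_1)$ a quiver, and $\widehat{T}_{\Sigma}(V)$ the associated complete tensor algebra (complete path algebra). Let $G$ be a homogeneous group of continuous algebra automorphisms of $\widehat{T}_{\Sigma}(V)$ which is invariant on $\Sigma$. Let $\omega$ be any space of path of length $m\ge1$, and fix, for every subpath $\omega'$ of $\omega$, a space of irreducible invariants $V^G_{\omega',\mathrm{irr}}$. Then the canonical map $$\psi_{\omega}:\bigoplus_{p} V^G_{\omega,p,\mathrm{irr}}\longrightarrow V^G_{\omega},$$ where $p$ runs through all ordered partitions of $m$, is bijective.
   Context: $k$ is a discrete topological field. For $i,j\in Q_0$, $VQ_{i,j}$ is the $k$-vector space spanned by the arrows of $Q$ from $i$ to $j$. $\Sigma=\prod_{i\in Q_0}ke_i$, $V=\prod_{i,j\in Q_0}VQ_{i,j}$ (a pseudocompact $\Sigma$-bimodule), $V^{\widehat{\otimes}_0}=\Sigma$, $V^{\widehat{\otimes}_n}=V\widehat{\otimes}_{\Sigma}V^{\widehat{\otimes}_{n-1}}$ (completed tensor product over $\Sigma$), and $\widehat{T}_{\Sigma}(V)=\prod_{n\ge0}V^{\widehat{\otimes}_n}$ with the product topology and multiplication given by the completed tensor product. A continuous algebra automorphism $g$ is homogeneous if $g(V^{\widehat{\otimes}_n})=V^{\widehat{\otimes}_n}$ for all $n\in\mathbb{N}$; a group is homogeneous if all its elements are. $G$ is invariant on $\Sigma$ means every element of $G$ acts as the identity on $\Sigma$; then each $V^{\widehat{\otimes}_n}$ is a $kG$-module and $G$ preserves the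 subspaces below. For a $G$-stable subspace $W$, $W^G$ denotes the fixed points. An arrow space is a nonzero $V_a=VQ_{i,j}$. For a sequence of arrow spaces $V_{a_1},\dots,V_{a_m}$ with $V_{a_n}=VQ_{i_{n-1},i_n}$, $V_\omega=V_{a_m}\widehat{\otimes}_\Sigma\cdots\widehat{\otimes}_\Sigma V_{a_1}\subseteq V^{\widehat{\otimes}_m}$ is a space of path $\omega$ from $i_0$ to $i_m$ of length $m$; spaces of the form $V_{a_t}\widehat{\otimes}_\Sigma\cdots\widehat{\otimes}_\Sigma V_{a_s}$ are its subpaths. A 2-partition $\omega=\omega_2\omega_1$ is a pair of subpaths with $V_\omega=V_{\omega_2}\widehat{\otimes}_\Sigma V_{\omega_1}$; $\varphi_{\omega_1,\omega_2}:V^G_{\omega_2}\widehat{\otimes}_\Sigma V^G_{\omega_1}\to V^G_\omega$ is the canonical map, and $\varphi_\omega=\sum_{\omega_2\omega_1=\omega}\varphi_{\omega_1,\omega_2}$. The image of $\varphi_\omega$ is the space of composite invariants; a space of irreducible invariants $V^G_{\omega,\mathrm{irr}}$ is any fixed complement of $\mathrm{Im}\,\varphi_\omega$ in $V^G_\omega$. For an ordered partition $p=(m_l,\dots,m_1)$ of $m$ into positive integers, write $\omega=\omega_{m_l}\cdots\omega_{m_1}$ with $\omega_{m_t}$ the unique subpath of length $m_t$ in this position, and set $V^G_{\omega,p,\mathrm{irr}}=V^G_{\omega_{m_l},\mathrm{irr}}\widehat{\otimes}_\Sigma\cdots\widehat{\otimes}_\Sigma V^G_{\omega_{m_1},\mathrm{irr}}$.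 The map $\psi_\omega$ is the sum of the canonical (multiplication) maps $V^G_{\omega,p,\mathrm{irr}}\to V^G_\omega$. *)

theory Defs
  imports Main "HOL-Library.FuncSet"
begin

text \<open>
The quiver is given by the types 'v (vertices Q0) and 'a (arrows Q1) with
source and target maps src, tgt.  The arrow space VQ(i,j) has the arrows
i -> j as a basis.  A space of path V_omega is determined by its vertex sequence
vs = [i_0, ..., i_m]; its elements are k-valued functions on arrow lists
[b_1, ..., b_m] (b_t an arrow i_(t-1) -> i_t), i.e. coordinates with respect to
the basis b_m (x) ... (x) b_1 of V_(a_m) (x) ... (x) V_(a_1).
The list index 0 corresponds to the first arrow b_1.
\<close>

definition paths :: "('a \<Rightarrow> 'v) \<Rightarrow> ('a \<Rightarrow> 'v) \<Rightarrow> 'v list \<Rightarrow> 'a list set" where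
  "paths src tgt vs = {as. length as + 1 = length vs \<and>
      (\<forall>t<length as. src (as ! t) = vs ! t \<and> tgt (as ! t) = vs ! Suc t)}"

definition is_path_space :: "('a \<Rightarrow> 'v) \<Rightarrow> ('a \<Rightarrow> 'v) \<Rightarrow> 'v list \<Rightarrow> bool" where
  "is_path_space src tgt vs \<longleftrightarrow> 2 \<le> length vs \<and>
      (\<forall>t. Suc t < length vs \<longrightarrow> (\<exists>a. src a = vs ! t \<and> tgt a = vs ! Suc t))"

definition pspace :: "('a \<Rightarrow> 'v) \<Rightarrow> ('a \<Rightarrow> 'v) \<Rightarrow> 'v list \<Rightarrow> ('a list \<Rightarrow> 'k::zero) set" where
  "pspace src tgt vs = {f. \<forall>x. f x \<noteq> 0 \<longrightarrow> x \<in> paths src tgt vs}"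

definition same_shape :: "('a \<Rightarrow> 'v) \<Rightarrow> ('a \<Rightarrow> 'v) \<Rightarrow> 'a list \<Rightarrow> 'a list set" where
  "same_shape src tgt c = {b. length b = length c \<and>
      (\<forall>t<length c. src (b ! t) = src (c ! t) \<and> tgt (b ! t) = tgt (c ! t))}"

text \<open>A homogeneous automorphism invariant on Sigma is determined by its restriction
to V, a Sigma-bimodule automorphism of V, i.e. a family of invertible linear maps of
the VQ(i,j).  We represent it by its matrix g c b = coefficient of the arrow c in g(b).
Its action on V^(tensor n) is the diagonal one g(b_m (x)...(x) b_1) = g b_m (x)...(x) g b_1.\<close>
definition gact :: "('a \<Rightarrow> 'v) \<Rightarrow> ('a \<Rightarrow> 'v) \<Rightarrow> ('a \<Rightarrow> 'a \<Rightarrow> 'k::field)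
    \<Rightarrow> ('a list \<Rightarrow> 'k) \<Rightarrow> ('a list \<Rightarrow> 'k)" where
  "gact src tgt g f = (\<lambda>c. \<Sum>b\<in>same_shape src tgt c. (\<Prod>t<length c. g (c ! t) (b ! t)) * f b)"

definition mat_id :: "'a \<Rightarrow> 'a \<Rightarrow> 'k::field" where
  "mat_id c b = (if c = b then 1 else 0)"

definition mat_comp :: "('a \<Rightarrow> 'v) \<Rightarrow> ('a \<Rightarrow> 'v) \<Rightarrow> ('a \<Rightarrow> 'a \<Rightarrow> 'k::field)
    \<Rightarrow> ('a \<Rightarrow> 'a \<Rightarrow> 'k) \<Rightarrow> ('a \<Rightarrow> 'a \<Rightarrow> 'k)" where
  "mat_comp src tgt g h = (\<lambda>c b. \<Sum>d\<in>{d. src d = src b \<and> tgt d = tgt b}. g c d * h d b)"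

text \<open>G is a group (under composition) of Sigma-bimodule automorphisms of V,
equivalently a homogeneous group of continuous automorphisms of the complete
path algebra which is invariant on Sigma.\<close>
definition homog_group :: "('a \<Rightarrow> 'v) \<Rightarrow> ('a \<Rightarrow> 'v) \<Rightarrow> ('a \<Rightarrow> 'a \<Rightarrow> 'k::field) set \<Rightarrow> bool" where
  "homog_group src tgt G \<longleftrightarrow>
     (\<forall>g\<in>G. \<forall>c b. g c b \<noteq> 0 \<longrightarrow> src c = src b \<and> tgt c = tgt b) \<and>
     mat_id \<in> G \<and>
     (\<forall>g\<in>G. \<forall>h\<in>G. mat_comp src tgt g h \<in> G) \<and>
     (\<forall>g\<in>G. \<exists>h\<in>G. mat_comp src tgt g h = mat_id \<and> mat_comp src tgt h g = mat_id)"

definition invariants :: "('a \<Rightarrow> 'v) \<Rightarrow> ('a \<Rightarrow> 'v) \<Rightarrow> ('a \<Rightarrow> 'a \<Rightarrow> 'k::field) set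
    \<Rightarrow> 'v list \<Rightarrow> ('a list \<Rightarrow> 'k) set" where
  "invariants src tgt G vs = {f \<in> pspace src tgt vs. \<forall>g\<in>G. gact src tgt g f = f}"

definition seg :: "'v list \<Rightarrow> nat \<Rightarrow> nat \<Rightarrow> 'v list" where
  "seg vs s n = take (Suc n) (drop s vs)"

text \<open>Product (completed tensor product over Sigma = concatenation) of elements
fs = [f_1,...,f_l] of consecutive path spaces with lengths ns = [n_1,...,n_l];
f_1 lives on the first n_1 arrows.  This is the element f_l (x) ... (x) f_1.\<close>
fun tprodl :: "nat list \<Rightarrow> ('a list \<Rightarrow> 'k::comm_ring_1) list \<Rightarrow> 'a list \<Rightarrow> 'k" where
  "tprodl [] [] x = (if x = [] then 1 else 0)"
| "tprodl (n # ns) (f # fs) x = f (take n x) * tprodl ns fs (drop n x)"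
| "tprodl _ _ x = 0"

definition lspan :: "('b \<Rightarrow> 'k::field) set \<Rightarrow> ('b \<Rightarrow> 'k) set" where
  "lspan S = {(\<lambda>x. \<Sum>i<n. (c :: nat \<Rightarrow> 'k) i * fs i x) | n c fs. \<forall>i<n. fs i \<in> S}"

definition subsp :: "('b \<Rightarrow> 'k::field) set \<Rightarrow> bool" where
  "subsp W \<longleftrightarrow> (\<lambda>x. 0 :: 'k) \<in> W \<and> (\<forall>f\<in>W. \<forall>g\<in>W. (\<lambda>x. f x + g x) \<in> W) \<and>
     (\<forall>c :: 'k. \<forall>f\<in>W. (\<lambda>x. c * f x) \<in> W)"

text \<open>Image of varphi_omega: the space of composite invariants (sum over all
2-partitions omega = omega_2 omega_1 of the images of
V^G_(omega_2) (x) V^G_(omega_1)).\<close>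
definition composite :: "('a \<Rightarrow> 'v) \<Rightarrow> ('a \<Rightarrow> 'v) \<Rightarrow> ('a \<Rightarrow> 'a \<Rightarrow> 'k::field) set
    \<Rightarrow> 'v list \<Rightarrow> ('a list \<Rightarrow> 'k) set" where
  "composite src tgt G vs = lspan (\<Union>n\<in>{1..<length vs - 1}.
      {tprodl [n, length vs - 1 - n] [g, f] | g f.
         g \<in> invariants src tgt G (seg vs 0 n) \<and>
         f \<in> invariants src tgt G (seg vs n (length vs - 1 - n))})"

definition is_irr_space :: "('a \<Rightarrow> 'v) \<Rightarrow> ('a \<Rightarrow> 'v) \<Rightarrow> ('a \<Rightarrow> 'a \<Rightarrow> 'k::field) set
    \<Rightarrow> 'v list \<Rightarrow> ('a list \<Rightarrow> 'k) set \<Rightarrow> bool" where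
  "is_irr_space src tgt G vs C \<longleftrightarrow> subsp C \<and> C \<subseteq> invariants src tgt G vs \<and>
     (\<forall>f\<in>C. f \<in> composite src tgt G vs \<longrightarrow> f = (\<lambda>x. 0)) \<and>
     (\<forall>h\<in>invariants src tgt G vs. \<exists>f\<in>C. \<exists>g\<in>composite src tgt G vs. h = (\<lambda>x. f x + g x))"

text \<open>Ordered partitions of m, listed from the first subpath: [m_1, ..., m_l].\<close>
definition ord_partitions :: "nat \<Rightarrow> nat list set" where
  "ord_partitions m = {ps. ps \<noteq> [] \<and> (\<forall>x\<in>set ps. 0 < x) \<and> sum_list ps = m}"

text \<open>Image of V^G_(omega,p,irr) in V_omega (span of the products of irreducible
invariants of the pieces).\<close>
definition irr_prod :: "'v list \<Rightarrow> ('v list \<Rightarrow> ('a list \<Rightarrow> 'k::field) set) \<Rightarrow> nat list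
    \<Rightarrow> ('a list \<Rightarrow> 'k) set" where
  "irr_prod vs irr ps = lspan {tprodl ps fs | fs. length fs = length ps \<and>
      (\<forall>t<length ps. fs ! t \<in> irr (seg vs (sum_list (take t ps)) (ps ! t)))}"

end

theory Submission
  imports Defs
begin

(* Write V^G for the invariants of a path space, C for the composite ones and R for the chosen
   irreducible ones, so that V^G = R (+) C.  Splitting off the first irreducible factor gives,
   for a path omega of length m,
     V^G_omega = R_omega (+) (+)_{0<n<m} V^G_{omega_{>n}} (x) R_{omega_{<=n}},
   where omega_{<=n} is the initial subpath with n arrows and omega_{>n} the rest.  Decomposing
   the factors V^G_{omega_{>n}} in the same way (induction on the length), and using that
   tensoring with a space of homogeneous elements preserves direct sums, gives the
   decomposition indexed by the ordered partitions of m.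

   That the summands span is an induction on the length of the first factor.  Directness rests
   on one fact: an invariant in the left ideal generated by the invariants of the initial
   subpaths with fewer than K arrows is composite.  By induction on K, an element of the ideal
   for K + 1 is, modulo the ideal for K, a sum U of products b_i (x) r_i with r_i irreducible
   on the first K arrows.  Fixing the last m - K arrows maps the ideal for K into the
   corresponding ideal of omega_{<=K}, which meets R_{omega_{<=K}} only in 0 (induction on the
   length); hence g U = U for all g.  Writing U with linearly independent r_i then shows that
   every b_i is invariant, so U is composite. *)

section \<open>Subspaces of function spaces\<close>

lemma subsp_zero: "subsp W \<Longrightarrow> (\<lambda>x. 0) \<in> W"
  by (simp add: subsp_def)

lemma subsp_add: "subsp W \<Longrightarrow> f \<in> W \<Longrightarrow> g \<in> W \<Longrightarrow> (\<lambda>x. f x + g x) \<in> W"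
  by (simp add: subsp_def)

lemma subsp_scale: "subsp W \<Longrightarrow> f \<in> W \<Longrightarrow> (\<lambda>x. c * f x) \<in> W"
  by (simp add: subsp_def)

lemma subsp_neg: "subsp W \<Longrightarrow> f \<in> W \<Longrightarrow> (\<lambda>x. - f x) \<in> W"
  using subsp_scale[of W f "-1"] by simp

lemma subsp_diff: "subsp W \<Longrightarrow> f \<in> W \<Longrightarrow> g \<in> W \<Longrightarrow> (\<lambda>x. f x - g x) \<in> W"
  using subsp_add[of W f "\<lambda>x. - g x"] subsp_neg[of W g] by simp

lemma subsp_sum:
  assumes "subsp W" "\<forall>p\<in>F. w p \<in> W"
  shows "(\<lambda>x. \<Sum>p\<in>F. w p x) \<in> W"
proof (cases "finite F")
  case True
  then show ?thesis using assms(2)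
    by (induction F rule: finite_induct) (auto intro: subsp_zero subsp_add assms(1))
qed (simp add: subsp_zero assms(1))

lemma subsp_lin_comb:
  "subsp W \<Longrightarrow> \<forall>i\<in>F. f i \<in> W \<Longrightarrow> (\<lambda>x. \<Sum>i\<in>F. c i * f i x) \<in> W"
  using subsp_sum[of W F "\<lambda>i x. c i * f i x"] by (simp add: subsp_scale)

lemma lspanI: "\<forall>i<n. fs i \<in> S \<Longrightarrow> (\<lambda>x. \<Sum>i<(n::nat). c i * fs i x) \<in> lspan S"
  unfolding lspan_def by blast

lemma lspanE:
  assumes "f \<in> lspan S"
  obtains n c fs where "f = (\<lambda>x. \<Sum>i<(n::nat). c i * fs i x)" "\<forall>i<n. fs i \<in> S"
  using assms unfolding lspan_def by blast

lemma lspan_least: "subsp W \<Longrightarrow> S \<subseteq> W \<Longrightarrow> lspan S \<subseteq> W"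
proof
  assume "subsp W" "S \<subseteq> W"
  fix f assume "f \<in> lspan S"
  then obtain n c fs where "f = (\<lambda>x. \<Sum>i<(n::nat). c i * fs i x)" "\<forall>i<n. fs i \<in> S"
    by (rule lspanE)
  then show "f \<in> W" using subsp_lin_comb[OF \<open>subsp W\<close>, of "{..<n}" fs c] \<open>S \<subseteq> W\<close> by auto
qed

lemma lspan_superset: "S \<subseteq> lspan S"
proof
  fix f assume "f \<in> S"
  then have "(\<lambda>x. \<Sum>i<Suc 0. 1 * (\<lambda>_. f) i x) \<in> lspan S" by (intro lspanI) simp
  then show "f \<in> lspan S" by simp
qed

lemma subsp_lspan: "subsp (lspan S)"
  unfolding subsp_def
proof (intro conjI ballI allI)
  show "(\<lambda>x. 0) \<in> lspan S" using lspanI[of 0 _ S] by simp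
next
  fix f g assume "f \<in> lspan S" "g \<in> lspan S"
  then obtain n1 c1 fs1 n2 c2 fs2 where
    f: "f = (\<lambda>x. \<Sum>i<(n1::nat). c1 i * fs1 i x)" "\<forall>i<n1. fs1 i \<in> S" and
    g: "g = (\<lambda>x. \<Sum>i<(n2::nat). c2 i * fs2 i x)" "\<forall>i<n2. fs2 i \<in> S"
    by (elim lspanE)
  define c where "c i = (if i < n1 then c1 i else c2 (i - n1))" for i
  define fs where "fs i = (if i < n1 then fs1 i else fs2 (i - n1))" for i
  have split: "(\<Sum>i<n1 + n2. h i) = (\<Sum>i<n1. h i) + (\<Sum>i<n2. h (n1 + i))" for h :: "nat \<Rightarrow> 'b"
    by (induction n2) (simp_all add: add.assoc)
  have "(\<lambda>x. f x + g x) = (\<lambda>x. \<Sum>i<n1 + n2. c i * fs i x)"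
    unfolding split f(1) g(1) c_def fs_def by simp
  moreover have "\<forall>i<n1 + n2. fs i \<in> S" using f(2) g(2) unfolding fs_def by auto
  ultimately show "(\<lambda>x. f x + g x) \<in> lspan S" by (simp add: lspanI)
next
  fix d f assume "f \<in> lspan S"
  then obtain n c fs where f: "f = (\<lambda>x. \<Sum>i<(n::nat). c i * fs i x)" "\<forall>i<n. fs i \<in> S"
    by (rule lspanE)
  have "(\<lambda>x. d * f x) = (\<lambda>x. \<Sum>i<n. (d * c i) * fs i x)"
    unfolding f(1) by (simp add: sum_distrib_left mult.assoc)
  then show "(\<lambda>x. d * f x) \<in> lspan S" using f(2) by (simp add: lspanI)
qed

lemma lspan_eq: "subsp W \<Longrightarrow> lspan W = W"
  using lspan_least[of W W] lspan_superset[of W] by blast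

lemma lspan_mono: "A \<subseteq> B \<Longrightarrow> lspan A \<subseteq> lspan B"
  using lspan_least[OF subsp_lspan] lspan_superset by blast

lemma lspan_UN_lspan: "lspan (\<Union>n\<in>N. lspan (S n)) = lspan (\<Union>n\<in>N. S n)"
proof
  have "lspan (S n) \<subseteq> lspan (\<Union>n\<in>N. S n)" if "n \<in> N" for n
    using that by (intro lspan_mono) blast
  then show "lspan (\<Union>n\<in>N. lspan (S n)) \<subseteq> lspan (\<Union>n\<in>N. S n)"
    by (intro lspan_least subsp_lspan) blast
  have "S n \<subseteq> lspan (S n)" for n by (rule lspan_superset)
  then show "lspan (\<Union>n\<in>N. S n) \<subseteq> lspan (\<Union>n\<in>N. lspan (S n))"
    by (intro lspan_mono) blast
qed

definition linear_map :: "(('b \<Rightarrow> 'k::field) \<Rightarrow> ('c \<Rightarrow> 'k)) \<Rightarrow> bool" where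
  "linear_map L \<longleftrightarrow> (\<forall>f g. L (\<lambda>x. f x + g x) = (\<lambda>x. L f x + L g x)) \<and>
      (\<forall>c f. L (\<lambda>x. c * f x) = (\<lambda>x. c * L f x))"

lemma linear_map_add: "linear_map L \<Longrightarrow> L (\<lambda>x. f x + g x) = (\<lambda>x. L f x + L g x)"
  by (simp add: linear_map_def)

lemma linear_map_scale: "linear_map L \<Longrightarrow> L (\<lambda>x. c * f x) = (\<lambda>x. c * L f x)"
  by (simp add: linear_map_def)

lemma linear_map_zero: "linear_map L \<Longrightarrow> L (\<lambda>x. 0) = (\<lambda>x. 0)"
  using linear_map_scale[of L 0 "\<lambda>x. 0"] by simp

lemma linear_map_diff: "linear_map L \<Longrightarrow> L (\<lambda>x. f x - g x) = (\<lambda>x. L f x - L g x)"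
  using linear_map_add[of L f "\<lambda>x. (-1) * g x"] linear_map_scale[of L "-1" g] by simp

lemma linear_map_sum:
  assumes "linear_map L"
  shows "L (\<lambda>x. \<Sum>i\<in>I. f i x) = (\<lambda>x. \<Sum>i\<in>I. L (f i) x)"
proof (cases "finite I")
  case True
  then show ?thesis
    by (induction I rule: finite_induct)
      (simp_all add: linear_map_zero[OF assms] linear_map_add[OF assms])
qed (simp add: linear_map_zero[OF assms])

lemma linear_map_id: "linear_map (\<lambda>f. f)"
  by (simp add: linear_map_def)

lemma subsp_vimage: "linear_map L \<Longrightarrow> subsp X \<Longrightarrow> subsp {f. L f \<in> X}"
  unfolding subsp_def by (simp add: linear_map_add linear_map_scale linear_map_zero)

lemma lspan_linear_map:
  assumes "linear_map L" "subsp X" "\<forall>s\<in>S. L s \<in> X" "f \<in> lspan S"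
  shows "L f \<in> X"
  using lspan_least[OF subsp_vimage[OF assms(1,2)]] assms(3,4) by blast

definition sum_space :: "'i set \<Rightarrow> ('i \<Rightarrow> ('b \<Rightarrow> 'k::field) set) \<Rightarrow> ('b \<Rightarrow> 'k) set" where
  "sum_space F X = {(\<lambda>x. \<Sum>p\<in>F. w p x) | w. \<forall>p\<in>F. w p \<in> X p}"

lemma sum_spaceI: "\<forall>p\<in>F. w p \<in> X p \<Longrightarrow> (\<lambda>x. \<Sum>p\<in>F. w p x) \<in> sum_space F X"
  unfolding sum_space_def by blast

lemma sum_spaceE:
  assumes "f \<in> sum_space F X"
  obtains w where "f = (\<lambda>x. \<Sum>p\<in>F. w p x)" "\<forall>p\<in>F. w p \<in> X p"
  using assms unfolding sum_space_def by blast

lemma subsp_sum_space: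
  assumes "\<forall>p\<in>F. subsp (X p)"
  shows "subsp (sum_space F X)"
  unfolding subsp_def
proof (intro conjI ballI allI)
  show "(\<lambda>x. 0) \<in> sum_space F X"
    using sum_spaceI[of F "\<lambda>p x. 0" X] assms by (simp add: subsp_zero)
next
  fix f g assume "f \<in> sum_space F X" "g \<in> sum_space F X"
  obtain v w where "f = (\<lambda>x. \<Sum>p\<in>F. v p x)" "\<forall>p\<in>F. v p \<in> X p"
    and "g = (\<lambda>x. \<Sum>p\<in>F. w p x)" "\<forall>p\<in>F. w p \<in> X p"
    using \<open>f \<in> sum_space F X\<close> \<open>g \<in> sum_space F X\<close> by (elim sum_spaceE)
  then show "(\<lambda>x. f x + g x) \<in> sum_space F X"
    using sum_spaceI[of F "\<lambda>p x. v p x + w p x" X] assms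
    by (simp add: subsp_add sum.distrib)
next
  fix c f assume "f \<in> sum_space F X"
  then obtain w where "f = (\<lambda>x. \<Sum>p\<in>F. w p x)" "\<forall>p\<in>F. w p \<in> X p"
    by (rule sum_spaceE)
  then show "(\<lambda>x. c * f x) \<in> sum_space F X"
    using sum_spaceI[of F "\<lambda>p x. c * w p x" X] assms
    by (simp add: subsp_scale sum_distrib_left)
qed

lemma subset_sum_space:
  assumes "finite F" "\<forall>q\<in>F. subsp (X q)" "p \<in> F"
  shows "X p \<subseteq> sum_space F X"
proof
  fix f assume "f \<in> X p"
  have "\<forall>q\<in>F. (if q = p then f else (\<lambda>x. 0)) \<in> X q"
    using \<open>f \<in> X p\<close> assms(2) by (simp add: subsp_zero)
  from sum_spaceI[OF this] have "(\<lambda>x. \<Sum>q\<in>F. (if q = p then f x else 0)) \<in> sum_space F X"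
    by (simp add: if_distrib[of "\<lambda>f. f _"])
  then show "f \<in> sum_space F X" using assms(1,3) by simp
qed

lemma lspan_UN_subset_sum_space:
  "finite F \<Longrightarrow> \<forall>p\<in>F. subsp (X p) \<Longrightarrow> lspan (\<Union>p\<in>F. X p) \<subseteq> sum_space F X"
  by (intro lspan_least subsp_sum_space) (auto dest: subset_sum_space)

definition independent_spaces :: "'i set \<Rightarrow> ('i \<Rightarrow> ('b \<Rightarrow> 'k::field) set) \<Rightarrow> bool" where
  "independent_spaces F X \<longleftrightarrow> (\<forall>w. (\<forall>p\<in>F. w p \<in> X p) \<longrightarrow>
      (\<lambda>x. \<Sum>p\<in>F. w p x) = (\<lambda>x. 0) \<longrightarrow> (\<forall>p\<in>F. w p = (\<lambda>x. 0)))"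

lemma independent_spacesD:
  "independent_spaces F X \<Longrightarrow> \<forall>p\<in>F. w p \<in> X p \<Longrightarrow> (\<lambda>x. \<Sum>p\<in>F. w p x) = (\<lambda>x. 0) \<Longrightarrow>
    p \<in> F \<Longrightarrow> w p = (\<lambda>x. 0)"
  unfolding independent_spaces_def by blast

definition direct_sum :: "'i set \<Rightarrow> ('i \<Rightarrow> ('b \<Rightarrow> 'k::field) set) \<Rightarrow> ('b \<Rightarrow> 'k) set \<Rightarrow> bool" where
  "direct_sum F X Y \<longleftrightarrow> finite F \<and> (\<forall>p\<in>F. subsp (X p)) \<and> sum_space F X = Y \<and>
      independent_spaces F X"

lemma direct_sum_bij_betw:
  assumes "direct_sum F X Y"
  shows "bij_betw (\<lambda>w x. \<Sum>p\<in>F. w p x) (PiE F X) Y"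
proof -
  have sub: "\<forall>p\<in>F. subsp (X p)" and ind: "independent_spaces F X" and Y: "sum_space F X = Y"
    using assms by (auto simp: direct_sum_def)
  have "inj_on (\<lambda>w x. \<Sum>p\<in>F. w p x) (PiE F X)"
  proof (rule inj_onI)
    fix v w assume v: "v \<in> PiE F X" and w: "w \<in> PiE F X"
      and eq: "(\<lambda>x. \<Sum>p\<in>F. v p x) = (\<lambda>x. \<Sum>p\<in>F. w p x)"
    have "\<forall>p\<in>F. (\<lambda>x. v p x - w p x) \<in> X p"
      using v w sub by (auto simp: PiE_iff intro: subsp_diff)
    moreover have "(\<lambda>x. \<Sum>p\<in>F. v p x - w p x) = (\<lambda>x. 0)"
      using eq by (simp add: sum_subtractf fun_eq_iff)
    ultimately have "\<forall>p\<in>F. (\<lambda>x. v p x - w p x) = (\<lambda>x. 0)"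
      using independent_spacesD[OF ind, of "\<lambda>p x. v p x - w p x"] by blast
    then show "v = w"
      using v w by (intro PiE_ext) (auto simp: fun_eq_iff)
  qed
  moreover have "(\<lambda>w x. \<Sum>p\<in>F. w p x) ` PiE F X = sum_space F X"
  proof
    show "(\<lambda>w x. \<Sum>p\<in>F. w p x) ` PiE F X \<subseteq> sum_space F X"
      by (auto simp: PiE_iff intro: sum_spaceI)
    show "sum_space F X \<subseteq> (\<lambda>w x. \<Sum>p\<in>F. w p x) ` PiE F X"
    proof
      fix f assume "f \<in> sum_space F X"
      then obtain w where "f = (\<lambda>x. \<Sum>p\<in>F. w p x)" "\<forall>p\<in>F. w p \<in> X p"
        by (rule sum_spaceE)
      then show "f \<in> (\<lambda>w x. \<Sum>p\<in>F. w p x) ` PiE F X"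
        by (intro image_eqI[of _ _ "restrict w F"]) auto
    qed
  qed
  ultimately show ?thesis unfolding bij_betw_def Y by blast
qed

lemma direct_sumD:
  assumes "direct_sum F X Y"
  shows "finite F" "\<forall>p\<in>F. subsp (X p)" "sum_space F X = Y" "independent_spaces F X"
    "\<forall>p\<in>F. X p \<subseteq> Y"
  using assms subset_sum_space[of F X] by (auto simp: direct_sum_def)

definition plus_space :: "('b \<Rightarrow> 'k::field) set \<Rightarrow> ('b \<Rightarrow> 'k) set \<Rightarrow> ('b \<Rightarrow> 'k) set" where
  "plus_space A B = {(\<lambda>x. a x + b x) | a b. a \<in> A \<and> b \<in> B}"

lemma plus_spaceI: "a \<in> A \<Longrightarrow> b \<in> B \<Longrightarrow> (\<lambda>x. a x + b x) \<in> plus_space A B"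
  unfolding plus_space_def by blast

lemma plus_spaceE:
  assumes "f \<in> plus_space A B"
  obtains a b where "f = (\<lambda>x. a x + b x)" "a \<in> A" "b \<in> B"
  using assms unfolding plus_space_def by blast

lemma subsp_plus_space:
  assumes A: "subsp A" and B: "subsp B"
  shows "subsp (plus_space A B)"
  unfolding subsp_def
proof (intro conjI ballI allI)
  show "(\<lambda>x. 0) \<in> plus_space A B"
    using plus_spaceI[OF subsp_zero[OF A] subsp_zero[OF B]] by simp
next
  fix f g assume "f \<in> plus_space A B" "g \<in> plus_space A B"
  then obtain a1 b1 a2 b2 where "f = (\<lambda>x. a1 x + b1 x)" "a1 \<in> A" "b1 \<in> B"
    and "g = (\<lambda>x. a2 x + b2 x)" "a2 \<in> A" "b2 \<in> B" by (elim plus_spaceE)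
  moreover have "(\<lambda>x. (a1 x + a2 x) + (b1 x + b2 x)) \<in> plus_space A B"
    using \<open>a1 \<in> A\<close> \<open>a2 \<in> A\<close> \<open>b1 \<in> B\<close> \<open>b2 \<in> B\<close>
    by (intro plus_spaceI[OF subsp_add[OF A] subsp_add[OF B]])
  ultimately show "(\<lambda>x. f x + g x) \<in> plus_space A B" by (simp add: ac_simps)
next
  fix c f assume "f \<in> plus_space A B"
  then obtain a b where "f = (\<lambda>x. a x + b x)" "a \<in> A" "b \<in> B" by (rule plus_spaceE)
  moreover have "(\<lambda>x. c * a x + c * b x) \<in> plus_space A B"
    using \<open>a \<in> A\<close> \<open>b \<in> B\<close> by (intro plus_spaceI[OF subsp_scale[OF A] subsp_scale[OF B]])
  ultimately show "(\<lambda>x. c * f x) \<in> plus_space A B" by (simp add: distrib_left)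
qed

section \<open>Products of functions on words\<close>

(* tprod n a b is the product b \<otimes> a of the path algebra: a lives on the first n arrows. *)
definition tprod :: "nat \<Rightarrow> ('a list \<Rightarrow> 'k::field) \<Rightarrow> ('a list \<Rightarrow> 'k) \<Rightarrow> 'a list \<Rightarrow> 'k" where
  "tprod n a b = (\<lambda>x. a (take n x) * b (drop n x))"

definition tprod_span ::
    "nat \<Rightarrow> ('a list \<Rightarrow> 'k::field) set \<Rightarrow> ('a list \<Rightarrow> 'k) set \<Rightarrow> ('a list \<Rightarrow> 'k) set" where
  "tprod_span n A B = lspan {tprod n a b | a b. a \<in> A \<and> b \<in> B}"

definition degree_space :: "nat \<Rightarrow> ('a list \<Rightarrow> 'k::field) set" where
  "degree_space n = {f. \<forall>x. length x \<noteq> n \<longrightarrow> f x = 0}"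

lemma linear_map_tprod_left: "linear_map (\<lambda>a. tprod n a b)"
  unfolding linear_map_def tprod_def by (simp add: algebra_simps)

lemma linear_map_tprod_right: "linear_map (tprod n a)"
  unfolding linear_map_def tprod_def by (simp add: algebra_simps)

lemma tprod_assoc: "n \<le> K \<Longrightarrow> tprod K (tprod n a b) c = tprod n a (tprod (K - n) b c)"
  unfolding tprod_def by (simp add: fun_eq_iff drop_take min_def mult.assoc)

lemma subsp_tprod_span: "subsp (tprod_span n A B)"
  unfolding tprod_span_def by (rule subsp_lspan)

lemma tprod_in_tprod_span: "a \<in> A \<Longrightarrow> b \<in> B \<Longrightarrow> tprod n a b \<in> tprod_span n A B"
  unfolding tprod_span_def by (rule subsetD[OF lspan_superset]) blast

lemma tprod_span_linear_map:
  assumes "linear_map L" "subsp X" "\<forall>a\<in>A. \<forall>b\<in>B. L (tprod n a b) \<in> X" "f \<in> tprod_span n A B"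
  shows "L f \<in> X"
  using assms unfolding tprod_span_def by (intro lspan_linear_map[of L X]) auto

lemma tprod_span_least:
  "subsp X \<Longrightarrow> \<forall>a\<in>A. \<forall>b\<in>B. tprod n a b \<in> X \<Longrightarrow> tprod_span n A B \<subseteq> X"
  using tprod_span_linear_map[OF linear_map_id, of X A B n] by blast

lemma tprod_span_mono: "A \<subseteq> A' \<Longrightarrow> B \<subseteq> B' \<Longrightarrow> tprod_span n A B \<subseteq> tprod_span n A' B'"
  by (intro tprod_span_least subsp_tprod_span) (auto intro: tprod_in_tprod_span)

lemma tprod_span_lspan: "tprod_span n (lspan A) (lspan B) = tprod_span n A B"
proof
  have "tprod n a b \<in> tprod_span n A B" if a: "a \<in> lspan A" and b: "b \<in> lspan B" for a b
  proof -
    have "tprod n a' b \<in> tprod_span n A B" if "a' \<in> A" for a'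
      using that b by (intro lspan_linear_map[OF linear_map_tprod_right subsp_tprod_span])
        (auto intro: tprod_in_tprod_span)
    then show ?thesis
      using a by (intro lspan_linear_map[OF linear_map_tprod_left subsp_tprod_span, of A]) auto
  qed
  then show "tprod_span n (lspan A) (lspan B) \<subseteq> tprod_span n A B"
    by (intro tprod_span_least subsp_tprod_span) auto
qed (intro tprod_span_mono lspan_superset)+

lemma tprod_span_sum_space:
  assumes "B \<subseteq> sum_space F X" "\<forall>p\<in>F. subsp (X p)"
  shows "tprod_span n A B \<subseteq> sum_space F (\<lambda>p. tprod_span n A (X p))"
proof (rule tprod_span_least[OF subsp_sum_space], use subsp_tprod_span in blast, intro ballI)
  fix a b assume "a \<in> A" "b \<in> B"
  then obtain w where w: "b = (\<lambda>x. \<Sum>p\<in>F. w p x)" "\<forall>p\<in>F. w p \<in> X p"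
    using assms(1) by (blast elim: sum_spaceE)
  have "tprod n a b = (\<lambda>x. \<Sum>p\<in>F. tprod n a (w p) x)"
    unfolding w(1) tprod_def by (simp add: sum_distrib_left)
  also have "\<dots> \<in> sum_space F (\<lambda>p. tprod_span n A (X p))"
    using w(2) \<open>a \<in> A\<close> by (intro sum_spaceI) (auto intro: tprod_in_tprod_span)
  finally show "tprod n a b \<in> sum_space F (\<lambda>p. tprod_span n A (X p))" .
qed

definition tprod_sum_span :: "nat set \<Rightarrow> (nat \<Rightarrow> ('a list \<Rightarrow> 'k::field) set) \<Rightarrow>
    (nat \<Rightarrow> ('a list \<Rightarrow> 'k) set) \<Rightarrow> ('a list \<Rightarrow> 'k) set" where
  "tprod_sum_span N A B = lspan (\<Union>n\<in>N. tprod_span n (A n) (B n))"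

lemma subsp_tprod_sum_span: "subsp (tprod_sum_span N A B)"
  unfolding tprod_sum_span_def by (rule subsp_lspan)

lemma tprod_span_subset_tprod_sum_span:
  "n \<in> N \<Longrightarrow> tprod_span n (A n) (B n) \<subseteq> tprod_sum_span N A B"
  unfolding tprod_sum_span_def by (rule order.trans[OF _ lspan_superset]) blast

lemma tprod_in_tprod_sum_span:
  "n \<in> N \<Longrightarrow> a \<in> A n \<Longrightarrow> b \<in> B n \<Longrightarrow> tprod n a b \<in> tprod_sum_span N A B"
  using tprod_span_subset_tprod_sum_span tprod_in_tprod_span by blast

lemma tprod_sum_span_linear_map:
  assumes "linear_map L" "subsp X" "\<forall>n\<in>N. \<forall>a\<in>A n. \<forall>b\<in>B n. L (tprod n a b) \<in> X"
    "f \<in> tprod_sum_span N A B"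
  shows "L f \<in> X"
proof -
  have "\<forall>s\<in>(\<Union>n\<in>N. tprod_span n (A n) (B n)). L s \<in> X"
    using assms(3) tprod_span_linear_map[OF assms(1,2)] by blast
  then show ?thesis
    using lspan_linear_map[OF assms(1,2)] assms(4) unfolding tprod_sum_span_def by blast
qed

lemma tprod_sum_span_least:
  "subsp X \<Longrightarrow> \<forall>n\<in>N. \<forall>a\<in>A n. \<forall>b\<in>B n. tprod n a b \<in> X \<Longrightarrow> tprod_sum_span N A B \<subseteq> X"
  using tprod_sum_span_linear_map[OF linear_map_id, of X N A B] by blast

lemma tprod_sum_span_mono: "N \<subseteq> N' \<Longrightarrow> tprod_sum_span N A B \<subseteq> tprod_sum_span N' A B"
  unfolding tprod_sum_span_def by (intro lspan_mono) blast

lemma tprodl_pair: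
  assumes "f \<in> degree_space k"
  shows "tprodl [n, k] [g, f] = tprod n g f"
  using assms unfolding degree_space_def tprod_def by (auto simp: fun_eq_iff)

lemma tprodl_single: "f \<in> degree_space m \<Longrightarrow> tprodl [m] [f] = f"
  unfolding degree_space_def by (auto simp: fun_eq_iff)

lemma tprodl_Cons: "tprodl (n # ns) (f # fs) = tprod n f (tprodl ns fs)"
  by (simp add: fun_eq_iff tprod_def)

definition lin_independent :: "'i set \<Rightarrow> ('i \<Rightarrow> 'b \<Rightarrow> 'k::field) \<Rightarrow> bool" where
  "lin_independent I r \<longleftrightarrow> (\<forall>c. (\<lambda>x. \<Sum>i\<in>I. c i * r i x) = (\<lambda>x. 0) \<longrightarrow> (\<forall>i\<in>I. c i = 0))"

lemma lin_independentD:
  "lin_independent I r \<Longrightarrow> (\<lambda>x. \<Sum>i\<in>I. c i * r i x) = (\<lambda>x. 0) \<Longrightarrow> i \<in> I \<Longrightarrow> c i = 0"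
  unfolding lin_independent_def by blast

(* A linearly dependent first factor r k = - (\<Sum>i\<noteq>k. (c i / c k) * r i) is eliminated by
   moving it into the second factors. *)

lemma tprod_sum_eliminate:
  fixes r :: "'i \<Rightarrow> 'a list \<Rightarrow> 'k::field"
  assumes I: "finite I" "k \<in> I" "c k \<noteq> 0" and c: "(\<lambda>x. \<Sum>i\<in>I. c i * r i x) = (\<lambda>x. 0)"
  shows "(\<lambda>x. \<Sum>i\<in>I. tprod K (r i) (b i) x) =
    (\<lambda>x. \<Sum>i\<in>I - {k}. tprod K (r i) (\<lambda>y. b i y - c i / c k * b k y) x)"
proof
  fix x :: "'a list"
  let ?x1 = "take K x" and ?x2 = "drop K x"
  have "(\<Sum>i\<in>I - {k}. c i * r i ?x1) = - (c k * r k ?x1)"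
    using fun_cong[OF c, of ?x1] sum.remove[OF I(1,2), of "\<lambda>i. c i * r i ?x1"]
    by (simp add: eq_neg_iff_add_eq_0 add.commute)
  moreover have "(\<Sum>i\<in>I - {k}. r i ?x1 * (b i ?x2 - c i / c k * b k ?x2)) =
      (\<Sum>i\<in>I - {k}. r i ?x1 * b i ?x2 - b k ?x2 / c k * (c i * r i ?x1))"
    by (rule sum.cong) (simp_all add: right_diff_distrib mult_ac)
  then have "(\<Sum>i\<in>I - {k}. r i ?x1 * (b i ?x2 - c i / c k * b k ?x2)) =
      (\<Sum>i\<in>I - {k}. r i ?x1 * b i ?x2) - b k ?x2 / c k * (\<Sum>i\<in>I - {k}. c i * r i ?x1)"
    by (simp add: sum_subtractf sum_distrib_left)
  ultimately have "(\<Sum>i\<in>I - {k}. r i ?x1 * (b i ?x2 - c i / c k * b k ?x2)) =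
      (\<Sum>i\<in>I - {k}. r i ?x1 * b i ?x2) + r k ?x1 * b k ?x2"
    using I(3) by simp
  then show "(\<Sum>i\<in>I. tprod K (r i) (b i) x) =
      (\<Sum>i\<in>I - {k}. tprod K (r i) (\<lambda>y. b i y - c i / c k * b k y) x)"
    using sum.remove[OF I(1,2), of "\<lambda>i. r i ?x1 * b i ?x2"] by (simp add: tprod_def)
qed

lemma tprod_sum_independent:
  fixes r :: "'i \<Rightarrow> 'a list \<Rightarrow> 'k::field"
  assumes "finite I" "subsp B" "\<forall>i\<in>I. b i \<in> B"
  shows "\<exists>J b'. J \<subseteq> I \<and> lin_independent J r \<and> (\<forall>i\<in>J. b' i \<in> B) \<and>
    (\<lambda>x. \<Sum>i\<in>I. tprod K (r i) (b i) x) = (\<lambda>x. \<Sum>i\<in>J. tprod K (r i) (b' i) x)"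
  using assms(1,3)
proof (induction I arbitrary: b rule: finite_psubset_induct)
  case (psubset I)
  show ?case
  proof (cases "lin_independent I r")
    case False
    then obtain c k where c: "(\<lambda>x. \<Sum>i\<in>I. c i * r i x) = (\<lambda>x. 0)" and k: "k \<in> I" "c k \<noteq> 0"
      unfolding lin_independent_def by blast
    define b' where "b' i = (\<lambda>y. b i y - c i / c k * b k y)" for i
    have "\<forall>i\<in>I - {k}. b' i \<in> B"
    proof
      fix i assume "i \<in> I - {k}"
      then have "b i \<in> B" "b k \<in> B" using psubset.prems k(1) by auto
      then show "b' i \<in> B"
        unfolding b'_def by (intro subsp_diff[OF assms(2)] subsp_scale[OF assms(2)])
    qed
    then obtain J b'' where "J \<subseteq> I - {k}" "lin_independent J r" "\<forall>i\<in>J. b'' i \<in> B"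
      "(\<lambda>x. \<Sum>i\<in>I - {k}. tprod K (r i) (b' i) x) = (\<lambda>x. \<Sum>i\<in>J. tprod K (r i) (b'' i) x)"
      using psubset.IH[of "I - {k}" b'] k(1) by blast
    then show ?thesis
      using tprod_sum_eliminate[OF psubset.hyps(1) k c, of K b] unfolding b'_def by auto
  qed (use psubset.prems in \<open>intro exI[of _ I] exI[of _ b], auto\<close>)
qed

lemma tprod_span_independent_repr:
  assumes "U \<in> tprod_span K R B" "subsp B"
  obtains I r b where "finite (I :: nat set)" "lin_independent I r" "\<forall>i\<in>I. r i \<in> R \<and> b i \<in> B"
    "U = (\<lambda>x. \<Sum>i\<in>I. tprod K (r i) (b i) x)"
proof -
  obtain n c fs where U: "U = (\<lambda>x. \<Sum>i<(n::nat). c i * fs i x)"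
    and fs: "\<forall>i<n. fs i \<in> {tprod K a b | a b. a \<in> R \<and> b \<in> B}"
    using assms(1) unfolding tprod_span_def by (rule lspanE)
  have "\<forall>i\<in>{..<n}. \<exists>ab. fs i = tprod K (fst ab) (snd ab) \<and> fst ab \<in> R \<and> snd ab \<in> B"
  proof
    fix i assume "i \<in> {..<n}"
    then obtain a b where "fs i = tprod K a b" "a \<in> R" "b \<in> B" using fs by blast
    then show "\<exists>ab. fs i = tprod K (fst ab) (snd ab) \<and> fst ab \<in> R \<and> snd ab \<in> B"
      by (intro exI[of _ "(a, b)"]) simp
  qed
  then obtain ab where ab: "\<forall>i\<in>{..<n}. fs i = tprod K (fst (ab i)) (snd (ab i)) \<and>
      fst (ab i) \<in> R \<and> snd (ab i) \<in> B"
    by (rule bchoice[THEN exE])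
  define r b where "r i = fst (ab i)" and "b i = (\<lambda>y. c i * snd (ab i) y)" for i
  have U': "U = (\<lambda>x. \<Sum>i<n. tprod K (r i) (b i) x)"
    unfolding U r_def b_def using ab by (simp add: tprod_def mult.left_commute)
  have "\<forall>i\<in>{..<n}. b i \<in> B"
    using ab assms(2) unfolding b_def by (auto intro: subsp_scale)
  from tprod_sum_independent[OF finite_lessThan[of n] assms(2) this, of r K]
  obtain J b' where J: "J \<subseteq> {..<n}" "lin_independent J r" "\<forall>i\<in>J. b' i \<in> B"
    and eq: "(\<lambda>x. \<Sum>i<n. tprod K (r i) (b i) x) = (\<lambda>x. \<Sum>i\<in>J. tprod K (r i) (b' i) x)"
    by (elim exE conjE)
  show ?thesis
  proof (rule that[of J r b'])
    show "finite J" using J(1) by (rule finite_subset) simp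
    show "\<forall>i\<in>J. r i \<in> R \<and> b' i \<in> B" using ab J unfolding r_def by blast
  qed (use J(2) U' eq in simp_all)
qed

definition rslice :: "nat \<Rightarrow> 'a list \<Rightarrow> ('a list \<Rightarrow> 'k::field) \<Rightarrow> 'a list \<Rightarrow> 'k" where
  "rslice n z f = (\<lambda>x. if length x = n then f (x @ z) else 0)"

definition lslice :: "'a list \<Rightarrow> ('a list \<Rightarrow> 'k::field) \<Rightarrow> 'a list \<Rightarrow> 'k" where
  "lslice x f = (\<lambda>y. f (x @ y))"

lemma linear_map_rslice: "linear_map (rslice n z)"
  unfolding linear_map_def rslice_def by auto

lemma linear_map_lslice: "linear_map (lslice x)"
  unfolding linear_map_def lslice_def by simp

lemma rslice_tprod:
  assumes "a \<in> degree_space n" "n \<le> K"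
  shows "rslice K z (tprod n a b) = tprod n a (rslice (K - n) z b)"
  using assms unfolding rslice_def tprod_def degree_space_def
  by (auto simp: fun_eq_iff min_def)

lemma rslice_tprod_same: "a \<in> degree_space K \<Longrightarrow> rslice K z (tprod K a b) = (\<lambda>x. b z * a x)"
  unfolding rslice_def tprod_def degree_space_def by (auto simp: fun_eq_iff)

lemma rslice_tprod_span:
  assumes "subsp R" "R \<subseteq> degree_space K" "f \<in> tprod_span K R B"
  shows "rslice K z f \<in> R"
proof (rule tprod_span_linear_map[OF linear_map_rslice assms(1) _ assms(3)], intro ballI)
  fix a b assume "a \<in> R"
  then show "rslice K z (tprod K a b) \<in> R"
    using assms(2) rslice_tprod_same[of a K z b] subsp_scale[OF assms(1)] by auto
qed

lemma rslice_sum_tprod: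
  assumes "\<forall>i\<in>I. r i \<in> degree_space K"
  shows "rslice K z (\<lambda>x. \<Sum>i\<in>I. tprod K (r i) (b i) x) = (\<lambda>x. \<Sum>i\<in>I. b i z * r i x)"
  using assms unfolding rslice_def tprod_def degree_space_def by (auto simp: fun_eq_iff mult.commute)

lemma rslice_degree_space:
  "f \<in> degree_space K \<Longrightarrow> rslice K z f = (if z = [] then f else (\<lambda>x. 0))"
  unfolding rslice_def degree_space_def by (auto simp: fun_eq_iff)

lemma eq_zero_if_rslices_zero:
  assumes "\<forall>x. length x < K \<longrightarrow> f x = 0" "\<forall>z. rslice K z f = (\<lambda>x. 0)"
  shows "f = (\<lambda>x. 0)"
proof
  fix x
  show "f x = 0"
  proof (cases "length x < K")
    case False
    then show ?thesis
      using fun_cong[OF assms(2)[rule_format, of "drop K x"], of "take K x"]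
      by (simp add: rslice_def)
  qed (use assms(1) in simp)
qed

lemma tprod_span_vanishes_below:
  assumes "A \<subseteq> degree_space n" "f \<in> tprod_span n A B" "length x < n"
  shows "f x = 0"
proof -
  have "subsp {f :: 'a list \<Rightarrow> 'k::field. \<forall>x. length x < n \<longrightarrow> f x = 0}"
    unfolding subsp_def by simp
  moreover have "\<forall>a\<in>A. \<forall>b\<in>B. \<forall>x. length x < n \<longrightarrow> tprod n a b x = 0"
    using assms(1) unfolding tprod_def degree_space_def by auto
  ultimately show ?thesis
    using tprod_span_linear_map[OF linear_map_id, of "{f. \<forall>x. length x < n \<longrightarrow> f x = 0}" A B n]
      assms(2,3) by blast
qed

lemma lslice_tprod_span:
  assumes "subsp B" "length x = n" "f \<in> tprod_span n A B"
  shows "lslice x f \<in> B"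
proof (rule tprod_span_linear_map[OF linear_map_lslice assms(1) _ assms(3)], intro ballI)
  fix a b assume "b \<in> B"
  have "lslice x (tprod n a b) = (\<lambda>y. a x * b y)"
    using assms(2) by (simp add: lslice_def tprod_def)
  then show "lslice x (tprod n a b) \<in> B" using subsp_scale[OF assms(1) \<open>b \<in> B\<close>] by simp
qed

(* Fixing the first n letters of the words turns a relation among the products into a
   relation among the second factors. *)

lemma independent_spaces_tprod_span:
  assumes "A \<subseteq> degree_space n" "\<forall>p\<in>F. subsp (B p)" "independent_spaces F B"
  shows "independent_spaces F (\<lambda>p. tprod_span n A (B p))"
  unfolding independent_spaces_def
proof (intro allI impI ballI)
  fix v p assume v: "\<forall>p\<in>F. v p \<in> tprod_span n A (B p)"
    and sum: "(\<lambda>x. \<Sum>p\<in>F. v p x) = (\<lambda>x. 0)" and p: "p \<in> F"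
  show "v p = (\<lambda>x. 0)"
  proof
    fix x :: "'a list"
    show "v p x = 0"
    proof (cases "length x < n")
      case True
      then show ?thesis using tprod_span_vanishes_below[OF assms(1)] v p by blast
    next
      case False
      have "\<forall>q\<in>F. lslice (take n x) (v q) \<in> B q"
        using v assms(2) False by (auto intro: lslice_tprod_span)
      moreover have "(\<lambda>y. \<Sum>q\<in>F. lslice (take n x) (v q) y) = (\<lambda>y. 0)"
        using sum by (simp add: lslice_def fun_eq_iff)
      ultimately have "lslice (take n x) (v p) = (\<lambda>y. 0)"
        by (rule independent_spacesD[OF assms(3) _ _ p])
      then show ?thesis by (metis append_take_drop_id lslice_def)
    qed
  qed
qed

lemma direct_sum_tprod_span:
  assumes "direct_sum F X Y" "A \<subseteq> degree_space n"
  shows "direct_sum F (\<lambda>p. tprod_span n A (X p)) (tprod_span n A Y)"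
  unfolding direct_sum_def
proof (intro conjI ballI subsp_tprod_span)
  show "finite F" using direct_sumD(1)[OF assms(1)] .
  show "independent_spaces F (\<lambda>p. tprod_span n A (X p))"
    using direct_sumD(2,4)[OF assms(1)] by (rule independent_spaces_tprod_span[OF assms(2)])
  show "sum_space F (\<lambda>p. tprod_span n A (X p)) = tprod_span n A Y"
  proof
    show "sum_space F (\<lambda>p. tprod_span n A (X p)) \<subseteq> tprod_span n A Y"
    proof
      fix f assume "f \<in> sum_space F (\<lambda>p. tprod_span n A (X p))"
      then obtain w where "f = (\<lambda>x. \<Sum>p\<in>F. w p x)" "\<forall>p\<in>F. w p \<in> tprod_span n A (X p)"
        by (rule sum_spaceE)
      moreover have "\<forall>p\<in>F. tprod_span n A (X p) \<subseteq> tprod_span n A Y"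
        using direct_sumD(5)[OF assms(1)] by (simp add: tprod_span_mono)
      ultimately show "f \<in> tprod_span n A Y" by (blast intro: subsp_sum[OF subsp_tprod_span])
    qed
    show "tprod_span n A Y \<subseteq> sum_space F (\<lambda>p. tprod_span n A (X p))"
      using direct_sumD(2,3)[OF assms(1)] by (intro tprod_span_sum_space) auto
  qed
qed

section \<open>Paths and the diagonal action\<close>

lemma paths_split:
  assumes "k < length ws"
  shows "x \<in> paths src tgt ws \<longleftrightarrow>
    take k x \<in> paths src tgt (take (Suc k) ws) \<and> drop k x \<in> paths src tgt (drop k ws)"
proof
  assume "x \<in> paths src tgt ws"
  then show "take k x \<in> paths src tgt (take (Suc k) ws) \<and> drop k x \<in> paths src tgt (drop k ws)"
    using assms unfolding paths_def by auto
next
  assume "take k x \<in> paths src tgt (take (Suc k) ws) \<and> drop k x \<in> paths src tgt (drop k ws)"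
  then have l: "length x + 1 = length ws" and "k \<le> length x"
    and pre: "\<forall>t<k. src (x ! t) = ws ! t \<and> tgt (x ! t) = ws ! Suc t"
    and suf: "\<forall>t<length x - k. src (x ! (k + t)) = ws ! (k + t) \<and> tgt (x ! (k + t)) = ws ! Suc (k + t)"
    using assms unfolding paths_def by (auto simp: min_def split: if_splits)
  have "src (x ! t) = ws ! t \<and> tgt (x ! t) = ws ! Suc t" if "t < length x" for t
  proof (cases "t < k")
    case False
    then show ?thesis using suf[rule_format, of "t - k"] that by simp
  qed (use pre in blast)
  then show "x \<in> paths src tgt ws" unfolding paths_def using l by blast
qed

lemma subsp_pspace: "subsp (pspace src tgt ws)"
  unfolding subsp_def pspace_def by auto (metis add.right_neutral add_0)

lemma pspace_subset_degree_space: "pspace src tgt ws \<subseteq> degree_space (length ws - 1)"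
  unfolding pspace_def degree_space_def paths_def by force

lemma tprod_pspace:
  assumes "k < length ws" "a \<in> pspace src tgt (take (Suc k) ws)" "b \<in> pspace src tgt (drop k ws)"
  shows "tprod k a b \<in> pspace src tgt ws"
  unfolding pspace_def mem_Collect_eq
proof (intro allI impI)
  fix x assume "tprod k a b x \<noteq> 0"
  then have "a (take k x) \<noteq> 0" "b (drop k x) \<noteq> 0" by (auto simp: tprod_def)
  then show "x \<in> paths src tgt ws"
    using assms paths_split[OF assms(1)] unfolding pspace_def by blast
qed

lemma rslice_pspace:
  assumes "b \<in> pspace src tgt ws"
  shows "rslice j z b \<in> pspace src tgt (take (Suc j) ws)"
  unfolding pspace_def mem_Collect_eq
proof (intro allI impI)
  fix x assume "rslice j z b x \<noteq> 0"
  then have "length x = j" "x @ z \<in> paths src tgt ws"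
    using assms unfolding rslice_def pspace_def by (auto split: if_splits)
  moreover from this have "j < length ws" unfolding paths_def by simp
  ultimately show "x \<in> paths src tgt (take (Suc j) ws)" using paths_split[of j ws "x @ z"] by simp
qed

lemma linear_map_gact: "linear_map (gact src tgt g)"
  unfolding linear_map_def gact_def by (simp add: algebra_simps sum.distrib sum_distrib_left)

lemma gact_pspace:
  assumes "f \<in> pspace src tgt ws"
  shows "gact src tgt g f \<in> pspace src tgt ws"
  unfolding pspace_def mem_Collect_eq
proof (intro allI impI)
  fix c assume "gact src tgt g f c \<noteq> 0"
  then obtain b where "b \<in> same_shape src tgt c" "f b \<noteq> 0"
    unfolding gact_def by (metis (no_types, lifting) mult_zero_right sum.neutral)
  then show "c \<in> paths src tgt ws"
    using assms unfolding pspace_def paths_def same_shape_def by auto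
qed

lemma same_shape_append:
  "bij_betw (\<lambda>(b1, b2). b1 @ b2) (same_shape src tgt c1 \<times> same_shape src tgt c2)
     (same_shape src tgt (c1 @ c2))"
proof -
  let ?P = "\<lambda>b c. src b = src c \<and> tgt b = tgt c"
  have S: "same_shape src tgt c = {b. list_all2 ?P b c}" for c
    unfolding same_shape_def list_all2_conv_all_nth by auto
  show ?thesis
    unfolding S
  proof (rule bij_betw_byWitness[where f' = "\<lambda>b. (take (length c1) b, drop (length c1) b)"])
    show "(\<lambda>(b1, b2). b1 @ b2) ` ({b. list_all2 ?P b c1} \<times> {b. list_all2 ?P b c2})
        \<subseteq> {b. list_all2 ?P b (c1 @ c2)}"
      by (auto intro: list_all2_appendI)
    show "(\<lambda>b. (take (length c1) b, drop (length c1) b)) ` {b. list_all2 ?P b (c1 @ c2)}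
        \<subseteq> {b. list_all2 ?P b c1} \<times> {b. list_all2 ?P b c2}"
      by (auto simp: list_all2_append2)
  qed (auto dest: list_all2_lengthD)
qed

lemma gact_tprod:
  fixes g :: "'a \<Rightarrow> 'a \<Rightarrow> 'k::field"
  shows "gact src tgt g (tprod n u v) = tprod n (gact src tgt g u) (gact src tgt g v)"
proof
  fix c :: "'a list"
  let ?S = "same_shape src tgt" and ?c1 = "take n c" and ?c2 = "drop n c"
  let ?w = "\<lambda>c b. \<Prod>t<length c. g (c ! t) (b ! t)"
  have split: "(\<Prod>i<m + k. f i) = (\<Prod>i<m. f i) * (\<Prod>i<k. f (m + i))" for m k and f :: "nat \<Rightarrow> 'k"
    by (induction k) (simp_all add: mult.assoc)
  have w: "?w (c1 @ c2) (b1 @ b2) = ?w c1 b1 * ?w c2 b2"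
    if "b1 \<in> ?S c1" "b2 \<in> ?S c2" for c1 c2 b1 b2
    using that unfolding same_shape_def by (simp add: split nth_append)
  have bij: "bij_betw (\<lambda>(b1, b2). b1 @ b2) (?S ?c1 \<times> ?S ?c2) (?S c)"
    using same_shape_append[of src tgt ?c1 ?c2] by simp
  have "gact src tgt g (tprod n u v) c = (\<Sum>b\<in>?S c. ?w c b * (u (take n b) * v (drop n b)))"
    by (simp add: gact_def tprod_def)
  also have "\<dots> = (\<Sum>(b1, b2)\<in>?S ?c1 \<times> ?S ?c2. (?w ?c1 b1 * u b1) * (?w ?c2 b2 * v b2))"
  proof (subst sum.reindex_bij_betw[OF bij, symmetric], intro sum.cong refl, clarify)
    fix b1 b2 assume "b1 \<in> ?S ?c1" "b2 \<in> ?S ?c2"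
    moreover from this have "take n (b1 @ b2) = b1" "drop n (b1 @ b2) = b2"
      unfolding same_shape_def by (auto simp: min_def)
    ultimately show "?w c (b1 @ b2) * (u (take n (b1 @ b2)) * v (drop n (b1 @ b2))) =
        ?w ?c1 b1 * u b1 * (?w ?c2 b2 * v b2)"
      using w[of b1 ?c1 b2 ?c2] by (simp add: ac_simps)
  qed
  also have "\<dots> = gact src tgt g u ?c1 * gact src tgt g v ?c2"
    unfolding gact_def by (simp add: sum_product sum.cartesian_product)
  finally show "gact src tgt g (tprod n u v) c = tprod n (gact src tgt g u) (gact src tgt g v) c"
    by (simp add: tprod_def)
qed

section \<open>Ordered partitions\<close>

lemma finite_ord_partitions: "finite (ord_partitions m)"
proof (rule finite_subset)
  show "ord_partitions m \<subseteq> {ps. set ps \<subseteq> {..m} \<and> length ps \<le> m}"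
  proof
    fix ps assume "ps \<in> ord_partitions m"
    then have pos: "\<forall>x\<in>set ps. 0 < x" and sum: "sum_list ps = m"
      unfolding ord_partitions_def by auto
    have "length ps \<le> sum_list ps" using pos by (induction ps) auto
    then show "ps \<in> {ps. set ps \<subseteq> {..m} \<and> length ps \<le> m}"
      using member_le_sum_list[of _ ps] sum by auto
  qed
qed (rule finite_lists_length_le[OF finite_atMost])

lemma ord_partitions_first_part:
  assumes "1 \<le> m"
  shows "ord_partitions m = insert [m] (\<Union>n\<in>{1..<m}. Cons n ` ord_partitions (m - n))"
proof (intro equalityI subsetI)
  fix ps assume ps: "ps \<in> ord_partitions m"
  then obtain n p where ps_eq: "ps = n # p" unfolding ord_partitions_def by (cases ps) auto
  show "ps \<in> insert [m] (\<Union>n\<in>{1..<m}. Cons n ` ord_partitions (m - n))"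
  proof (cases "p = []")
    case False
    then have "0 < sum_list p" using ps unfolding ps_eq ord_partitions_def by (cases p) auto
    then have "n \<in> {1..<m}" "p \<in> ord_partitions (m - n)"
      using ps False unfolding ps_eq ord_partitions_def by auto
    then show ?thesis unfolding ps_eq by blast
  qed (use ps ps_eq in \<open>simp add: ord_partitions_def\<close>)
qed (use assms in \<open>auto simp: ord_partitions_def\<close>)

lemma sum_ord_partitions:
  assumes "1 \<le> m"
  shows "(\<Sum>p\<in>ord_partitions m. F p) =
    F [m] + (\<Sum>n\<in>{1..<m}. \<Sum>p\<in>ord_partitions (m - n). F (n # p))"
proof -
  have "[m] \<notin> (\<Union>n\<in>{1..<m}. Cons n ` ord_partitions (m - n))"
    by (auto simp: ord_partitions_def)
  then have "(\<Sum>p\<in>ord_partitions m. F p) =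
      F [m] + (\<Sum>p\<in>(\<Union>n\<in>{1..<m}. Cons n ` ord_partitions (m - n)). F p)"
    unfolding ord_partitions_first_part[OF assms] by (simp add: finite_ord_partitions)
  also have "(\<Sum>p\<in>(\<Union>n\<in>{1..<m}. Cons n ` ord_partitions (m - n)). F p) =
      (\<Sum>n\<in>{1..<m}. \<Sum>p\<in>Cons n ` ord_partitions (m - n). F p)"
    by (rule sum.UNION_disjoint) (auto simp: finite_ord_partitions)
  also have "\<dots> = (\<Sum>n\<in>{1..<m}. \<Sum>p\<in>ord_partitions (m - n). F (n # p))"
    by (simp add: sum.reindex)
  finally show ?thesis .
qed

lemma ord_partitions_cases:
  assumes "1 \<le> m" "p \<in> ord_partitions m"
  obtains "p = [m]" | n q where "n \<in> {1..<m}" "q \<in> ord_partitions (m - n)" "p = n # q"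
  using assms ord_partitions_first_part[OF assms(1)] by blast

definition group_by_first_part ::
    "nat \<Rightarrow> (nat list \<Rightarrow> 'b \<Rightarrow> 'c::comm_monoid_add) \<Rightarrow> nat \<Rightarrow> 'b \<Rightarrow> 'c" where
  "group_by_first_part m w n =
    (if n = m then w [m] else (\<lambda>x. \<Sum>p\<in>ord_partitions (m - n). w (n # p) x))"

lemma sum_group_by_first_part:
  assumes "1 \<le> m"
  shows "(\<lambda>x. \<Sum>p\<in>ord_partitions m. w p x) = (\<lambda>x. \<Sum>n\<in>{1..m}. group_by_first_part m w n x)"
proof
  fix x
  have "(\<Sum>n\<in>{1..<m}. group_by_first_part m w n x) =
      (\<Sum>n\<in>{1..<m}. \<Sum>p\<in>ord_partitions (m - n). w (n # p) x)"
    by (rule sum.cong) (auto simp: group_by_first_part_def)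
  moreover have "{1..m} = insert m {1..<m}" using assms by auto
  ultimately show "(\<Sum>p\<in>ord_partitions m. w p x) = (\<Sum>n\<in>{1..m}. group_by_first_part m w n x)"
    using sum_ord_partitions[OF assms, of "\<lambda>p. w p x"] by (simp add: group_by_first_part_def)
qed

context
  fixes m :: nat and X :: "nat list \<Rightarrow> ('b \<Rightarrow> 'k::field) set" and Z Y
  assumes m: "1 \<le> m" and outer: "direct_sum {1..m} Z Y" and last: "Z m = X [m]"
    and inner: "\<forall>n\<in>{1..<m}. direct_sum (ord_partitions (m - n)) (\<lambda>p. X (n # p)) (Z n)"
begin

private lemma group_by_first_part_mem:
  assumes w: "\<forall>p\<in>ord_partitions m. w p \<in> X p" and n: "n \<in> {1..m}"
  shows "group_by_first_part m w n \<in> Z n"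
proof (cases "n = m")
  case False
  then have "n \<in> {1..<m}" using n by auto
  moreover from this have "\<forall>p\<in>ord_partitions (m - n). w (n # p) \<in> X (n # p)"
    using w ord_partitions_first_part[OF m] by blast
  ultimately show ?thesis
    using False sum_spaceI direct_sumD(3)[OF inner[rule_format]]
    by (fastforce simp: group_by_first_part_def)
qed (use w last ord_partitions_first_part[OF m] in \<open>simp add: group_by_first_part_def\<close>)

private lemma subsp_by_first_part: "\<forall>p\<in>ord_partitions m. subsp (X p)"
proof
  fix p assume "p \<in> ord_partitions m"
  then consider "p = [m]" | n q where "n \<in> {1..<m}" "q \<in> ord_partitions (m - n)" "p = n # q"
    using ord_partitions_first_part[OF m] by blast
  then show "subsp (X p)"
  proof cases
    case 1
    have "subsp (Z m)" using direct_sumD(2)[OF outer] m by simp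
    then show ?thesis using 1 last by simp
  qed (use direct_sumD(2)[OF inner[rule_format]] in blast)
qed

private lemma sum_space_by_first_part: "sum_space (ord_partitions m) X = Y"
proof
  show "sum_space (ord_partitions m) X \<subseteq> Y"
    using group_by_first_part_mem direct_sumD(3)[OF outer]
    by (auto elim!: sum_spaceE simp: sum_group_by_first_part[OF m] intro!: sum_spaceI)
  show "Y \<subseteq> sum_space (ord_partitions m) X"
  proof
    fix y assume "y \<in> Y"
    then obtain u where y: "y = (\<lambda>x. \<Sum>n\<in>{1..m}. u n x)" and u: "\<forall>n\<in>{1..m}. u n \<in> Z n"
      using direct_sumD(3)[OF outer] by (auto elim: sum_spaceE)
    have "\<forall>n\<in>{1..<m}. \<exists>v. u n = (\<lambda>x. \<Sum>p\<in>ord_partitions (m - n). v p x) \<and>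
        (\<forall>p\<in>ord_partitions (m - n). v p \<in> X (n # p))"
    proof
      fix n assume n: "n \<in> {1..<m}"
      then have "u n \<in> sum_space (ord_partitions (m - n)) (\<lambda>p. X (n # p))"
        using u direct_sumD(3)[OF inner[rule_format, OF n]] by auto
      then show "\<exists>v. u n = (\<lambda>x. \<Sum>p\<in>ord_partitions (m - n). v p x) \<and>
          (\<forall>p\<in>ord_partitions (m - n). v p \<in> X (n # p))"
        by (elim sum_spaceE) blast
    qed
    then obtain v where v: "\<forall>n\<in>{1..<m}. u n = (\<lambda>x. \<Sum>p\<in>ord_partitions (m - n). v n p x) \<and>
        (\<forall>p\<in>ord_partitions (m - n). v n p \<in> X (n # p))"
      by (rule bchoice[THEN exE])
    define w where "w p = (if p = [m] then u m else v (hd p) (tl p))" for p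
    have "\<forall>n\<in>{1..m}. group_by_first_part m w n = u n"
      using v by (auto simp: group_by_first_part_def w_def)
    then have "y = (\<lambda>x. \<Sum>p\<in>ord_partitions m. w p x)"
      unfolding y sum_group_by_first_part[OF m] by simp
    moreover have "\<forall>p\<in>ord_partitions m. w p \<in> X p"
      using u v last m by (auto simp: w_def elim!: ord_partitions_cases[OF m])
    ultimately show "y \<in> sum_space (ord_partitions m) X" by (simp add: sum_spaceI)
  qed
qed

private lemma independent_spaces_by_first_part: "independent_spaces (ord_partitions m) X"
  unfolding independent_spaces_def
proof (intro allI impI ballI)
  fix w p assume w: "\<forall>p\<in>ord_partitions m. w p \<in> X p"
    and sum: "(\<lambda>x. \<Sum>p\<in>ord_partitions m. w p x) = (\<lambda>x. 0)" and p: "p \<in> ord_partitions m"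
  have group0: "group_by_first_part m w n = (\<lambda>x. 0)" if "n \<in> {1..m}" for n
    using independent_spacesD[OF direct_sumD(4)[OF outer]] group_by_first_part_mem[OF w] sum that
    unfolding sum_group_by_first_part[OF m] by blast
  show "w p = (\<lambda>x. 0)"
    using m p
  proof (cases rule: ord_partitions_cases)
    case 1
    then show ?thesis using group0[of m] m by (simp add: group_by_first_part_def)
  next
    case (2 n q)
    then have "(\<lambda>x. \<Sum>q\<in>ord_partitions (m - n). w (n # q) x) = (\<lambda>x. 0)"
      using group0[of n] by (simp add: group_by_first_part_def)
    moreover have "\<forall>q\<in>ord_partitions (m - n). w (n # q) \<in> X (n # q)"
      using w 2 ord_partitions_first_part[OF m] by blast
    ultimately have "w (n # q) = (\<lambda>x. 0)"
      using independent_spacesD[OF direct_sumD(4)[OF inner[rule_format, OF 2(1)]],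
          of "\<lambda>q. w (n # q)"] 2(2)
      by blast
    then show ?thesis using 2(3) by simp
  qed
qed

lemma direct_sum_by_first_part: "direct_sum (ord_partitions m) X Y"
  unfolding direct_sum_def
  using finite_ord_partitions subsp_by_first_part sum_space_by_first_part
    independent_spaces_by_first_part by blast

end

section \<open>Invariants and irreducible invariants\<close>

locale quiver_action =
  fixes src tgt :: "'a \<Rightarrow> 'v" and G :: "('a \<Rightarrow> 'a \<Rightarrow> 'k::field) set"
begin

abbreviation PS :: "'v list \<Rightarrow> ('a list \<Rightarrow> 'k) set" where "PS \<equiv> pspace src tgt"

abbreviation IV :: "'v list \<Rightarrow> ('a list \<Rightarrow> 'k) set" where "IV \<equiv> invariants src tgt G"

abbreviation CP :: "'v list \<Rightarrow> ('a list \<Rightarrow> 'k) set" where "CP \<equiv> composite src tgt G"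

abbreviation act :: "('a \<Rightarrow> 'a \<Rightarrow> 'k) \<Rightarrow> ('a list \<Rightarrow> 'k) \<Rightarrow> 'a list \<Rightarrow> 'k" where
  "act \<equiv> gact src tgt"

lemma invariants_iff: "f \<in> IV ws \<longleftrightarrow> f \<in> PS ws \<and> (\<forall>g\<in>G. act g f = f)"
  by (simp add: invariants_def)

lemma subsp_invariants: "subsp (IV ws)"
  unfolding subsp_def
proof (intro conjI ballI allI)
  have "subsp (PS ws)" by (rule subsp_pspace)
  then show "(\<lambda>x. 0) \<in> IV ws"
    by (simp add: invariants_iff subsp_zero linear_map_zero[OF linear_map_gact])
  fix f h c assume f: "f \<in> IV ws" and h: "h \<in> IV ws"
  then show "(\<lambda>x. f x + h x) \<in> IV ws"
    using \<open>subsp (PS ws)\<close> by (simp add: invariants_iff subsp_add linear_map_add[OF linear_map_gact])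
  show "(\<lambda>x. c * f x) \<in> IV ws"
    using f \<open>subsp (PS ws)\<close> by (simp add: invariants_iff subsp_scale linear_map_scale[OF linear_map_gact])
qed

lemma tprod_invariants:
  assumes "k < length ws" "a \<in> IV (take (Suc k) ws)" "b \<in> IV (drop k ws)"
  shows "tprod k a b \<in> IV ws"
proof -
  have "tprod k a b \<in> PS ws"
    using assms by (intro tprod_pspace) (simp_all add: invariants_iff)
  then show ?thesis using assms(2,3) by (simp add: invariants_iff gact_tprod)
qed

lemma composite_eq:
  "CP ws = tprod_sum_span {1..<length ws - 1} (\<lambda>n. IV (take (Suc n) ws)) (\<lambda>n. IV (drop n ws))"
proof -
  have "{tprodl [n, length ws - 1 - n] [g, f] |g f.
          g \<in> IV (seg ws 0 n) \<and> f \<in> IV (seg ws n (length ws - 1 - n))}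
      = {tprod n g f |g f. g \<in> IV (take (Suc n) ws) \<and> f \<in> IV (drop n ws)}"
    if n: "n \<in> {1..<length ws - 1}" for n
  proof -
    have eq: "tprodl [n, length ws - 1 - n] [g, f] = tprod n g f" if "f \<in> IV (drop n ws)" for g f
      using that n pspace_subset_degree_space[of src tgt "drop n ws"]
      by (intro tprodl_pair) (auto simp: invariants_iff)
    have seg: "seg ws 0 n = take (Suc n) ws" "seg ws n (length ws - 1 - n) = drop n ws"
      using n by (simp_all add: seg_def)
    show ?thesis
      unfolding seg
    proof (intro set_eqI iffI)
      fix x assume "x \<in> {tprodl [n, length ws - 1 - n] [g, f] |g f.
          g \<in> IV (take (Suc n) ws) \<and> f \<in> IV (drop n ws)}"
      then obtain g f where "x = tprodl [n, length ws - 1 - n] [g, f]"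
        "g \<in> IV (take (Suc n) ws)" "f \<in> IV (drop n ws)" by blast
      then show "x \<in> {tprod n g f |g f. g \<in> IV (take (Suc n) ws) \<and> f \<in> IV (drop n ws)}"
        using eq by blast
    next
      fix x assume "x \<in> {tprod n g f |g f. g \<in> IV (take (Suc n) ws) \<and> f \<in> IV (drop n ws)}"
      then obtain g f where "x = tprod n g f" "g \<in> IV (take (Suc n) ws)" "f \<in> IV (drop n ws)"
        by blast
      then show "x \<in> {tprodl [n, length ws - 1 - n] [g, f] |g f.
          g \<in> IV (take (Suc n) ws) \<and> f \<in> IV (drop n ws)}"
        using eq by (intro CollectI exI[of _ g] exI[of _ f]) simp
    qed
  qed
  then show ?thesis
    unfolding composite_def tprod_sum_span_def tprod_span_def lspan_UN_lspan
    by (metis (no_types, lifting) SUP_cong)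
qed

lemma subsp_composite: "subsp (CP ws)"
  unfolding composite_eq by (rule subsp_tprod_sum_span)

lemma tprod_span_subset_composite:
  "n \<in> {1..<length ws - 1} \<Longrightarrow> tprod_span n (IV (take (Suc n) ws)) (IV (drop n ws)) \<subseteq> CP ws"
  unfolding composite_eq by (rule tprod_span_subset_tprod_sum_span)

lemma tprod_composite_in_subspace:
  assumes "K < length vs" "c \<in> CP (take (Suc K) vs)" "subsp X"
    "\<And>n a d. n \<in> {1..<K} \<Longrightarrow> a \<in> IV (take (Suc n) vs) \<Longrightarrow>
      d \<in> IV (take (Suc (K - n)) (drop n vs)) \<Longrightarrow> tprod n a (tprod (K - n) d b) \<in> X"
  shows "tprod K c b \<in> X"
  using assms(2) unfolding composite_eq
proof (rule tprod_sum_span_linear_map[OF linear_map_tprod_left assms(3), rotated], intro ballI)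
  fix n a d assume n: "n \<in> {1..<length (take (Suc K) vs) - 1}"
    and "a \<in> IV (take (Suc n) (take (Suc K) vs))" "d \<in> IV (drop n (take (Suc K) vs))"
  moreover have "n < K" using n assms(1) by auto
  ultimately show "tprod K (tprod n a d) b \<in> X"
    using assms(4) by (simp add: tprod_assoc min_def drop_take Suc_diff_le)
qed

lemma composite_subset_invariants: "CP ws \<subseteq> IV ws"
  unfolding composite_eq
  by (intro tprod_sum_span_least subsp_invariants ballI tprod_invariants) auto

lemma is_irr_spaceD:
  assumes "is_irr_space src tgt G ws R"
  shows "subsp R" "R \<subseteq> IV ws" "\<And>f. f \<in> R \<Longrightarrow> f \<in> CP ws \<Longrightarrow> f = (\<lambda>x. 0)"
    "\<And>h. h \<in> IV ws \<Longrightarrow> \<exists>f\<in>R. \<exists>c\<in>CP ws. h = (\<lambda>x. f x + c x)"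
  using assms unfolding is_irr_space_def by auto

definition irr_subpaths :: "('v list \<Rightarrow> ('a list \<Rightarrow> 'k) set) \<Rightarrow> 'v list \<Rightarrow> bool" where
  "irr_subpaths irr vs \<longleftrightarrow> (\<forall>s n. 1 \<le> n \<and> s + n < length vs \<longrightarrow>
     is_irr_space src tgt G (seg vs s n) (irr (seg vs s n)))"

lemma irr_subpaths_take: "irr_subpaths irr vs \<Longrightarrow> irr_subpaths irr (take (Suc K) vs)"
  unfolding irr_subpaths_def seg_def by (auto simp: drop_take take_take min_def)

lemma irr_subpaths_drop: "irr_subpaths irr vs \<Longrightarrow> irr_subpaths irr (drop k vs)"
  unfolding irr_subpaths_def seg_def by (auto simp: add.assoc)

lemma irr_subpaths_prefix:
  "irr_subpaths irr vs \<Longrightarrow> 1 \<le> K \<Longrightarrow> K < length vs \<Longrightarrow>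
    is_irr_space src tgt G (take (Suc K) vs) (irr (take (Suc K) vs))"
  unfolding irr_subpaths_def seg_def by (metis add_0 drop0)

lemma invariants_subset_degree_space: "IV ws \<subseteq> degree_space (length ws - 1)"
  using pspace_subset_degree_space[of src tgt ws] by (auto simp: invariants_iff)

section \<open>The left ideal generated by short invariants\<close>

(* The component in V_omega of the left ideal of the path algebra generated by the invariants
   of the initial subpaths with fewer than K arrows. *)

definition inv_ideal :: "'v list \<Rightarrow> nat \<Rightarrow> ('a list \<Rightarrow> 'k) set" where
  "inv_ideal vs K = tprod_sum_span {1..<K} (\<lambda>n. IV (take (Suc n) vs)) (\<lambda>n. PS (drop n vs))"

lemma subsp_inv_ideal: "subsp (inv_ideal vs K)"
  unfolding inv_ideal_def by (rule subsp_tprod_sum_span)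

lemma tprod_in_inv_ideal:
  "n \<in> {1..<K} \<Longrightarrow> a \<in> IV (take (Suc n) vs) \<Longrightarrow> b \<in> PS (drop n vs) \<Longrightarrow> tprod n a b \<in> inv_ideal vs K"
  unfolding inv_ideal_def by (rule tprod_in_tprod_sum_span)

lemma tprod_span_subset_inv_ideal:
  "n \<in> {1..<K} \<Longrightarrow> tprod_span n (IV (take (Suc n) vs)) (PS (drop n vs)) \<subseteq> inv_ideal vs K"
  unfolding inv_ideal_def by (rule tprod_span_subset_tprod_sum_span)

lemma inv_ideal_mono: "K \<le> K' \<Longrightarrow> inv_ideal vs K \<subseteq> inv_ideal vs K'"
  unfolding inv_ideal_def by (intro tprod_sum_span_mono) auto

lemma inv_ideal_trivial: "K \<le> 1 \<Longrightarrow> f \<in> inv_ideal vs K \<Longrightarrow> f = (\<lambda>x. 0)"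
  using tprod_sum_span_least[of "{\<lambda>x. 0}" "{1..<K}"] unfolding inv_ideal_def subsp_def by auto

lemma inv_ideal_subset_pspace: "K < length vs \<Longrightarrow> inv_ideal vs K \<subseteq> PS vs"
  unfolding inv_ideal_def
  by (intro tprod_sum_span_least subsp_pspace ballI tprod_pspace) (auto simp: invariants_iff)

lemma gact_inv_ideal:
  assumes "g \<in> G" "f \<in> inv_ideal vs K"
  shows "act g f \<in> inv_ideal vs K"
  using assms(2) unfolding inv_ideal_def
proof (rule tprod_sum_span_linear_map[OF linear_map_gact subsp_tprod_sum_span, rotated],
    intro ballI)
  fix n a b assume "n \<in> {1..<K}" "a \<in> IV (take (Suc n) vs)" "b \<in> PS (drop n vs)"
  moreover from this have "act g (tprod n a b) = tprod n a (act g b)"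
    using assms(1) by (simp add: gact_tprod invariants_iff)
  ultimately show "act g (tprod n a b) \<in>
      tprod_sum_span {1..<K} (\<lambda>n. IV (take (Suc n) vs)) (\<lambda>n. PS (drop n vs))"
    by (auto intro: tprod_in_tprod_sum_span gact_pspace)
qed

lemma rslice_inv_ideal:
  assumes "K < length vs" "f \<in> inv_ideal vs K"
  shows "rslice K z f \<in> inv_ideal (take (Suc K) vs) K"
  using assms(2) unfolding inv_ideal_def
proof (rule tprod_sum_span_linear_map[OF linear_map_rslice subsp_tprod_sum_span, rotated], intro ballI)
  fix n a b assume n: "n \<in> {1..<K}" and a: "a \<in> IV (take (Suc n) vs)" and b: "b \<in> PS (drop n vs)"
  have "a \<in> degree_space n"
    using invariants_subset_degree_space[of "take (Suc n) vs"] a n assms(1) by auto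
  then have "rslice K z (tprod n a b) = tprod n a (rslice (K - n) z b)"
    using n by (intro rslice_tprod) auto
  moreover have "rslice (K - n) z b \<in> PS (drop n (take (Suc K) vs))"
    using rslice_pspace[OF b, of "K - n" z] n by (simp add: drop_take Suc_diff_le)
  ultimately show "rslice K z (tprod n a b) \<in> tprod_sum_span {1..<K}
      (\<lambda>n. IV (take (Suc n) (take (Suc K) vs))) (\<lambda>n. PS (drop n (take (Suc K) vs)))"
    using a n by (auto intro: tprod_in_tprod_sum_span)
qed

lemma tprod_composite_in_inv_ideal:
  assumes "K < length vs" "c \<in> CP (take (Suc K) vs)" "b \<in> PS (drop K vs)"
  shows "tprod K c b \<in> inv_ideal vs K"
proof (rule tprod_composite_in_subspace[OF assms(1,2) subsp_inv_ideal])
  fix n a d assume "n \<in> {1..<K}" "a \<in> IV (take (Suc n) vs)" "d \<in> IV (take (Suc (K - n)) (drop n vs))"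
  moreover from this have "tprod (K - n) d b \<in> PS (drop n vs)"
    using assms by (intro tprod_pspace) (auto simp: invariants_iff)
  ultimately show "tprod n a (tprod (K - n) d b) \<in> inv_ideal vs K"
    by (intro tprod_in_inv_ideal)
qed

lemma inv_ideal_Suc:
  assumes "1 \<le> K" "K < length vs" "is_irr_space src tgt G (take (Suc K) vs) R"
  shows "inv_ideal vs (Suc K) \<subseteq> plus_space (inv_ideal vs K) (tprod_span K R (PS (drop K vs)))"
  unfolding inv_ideal_def
proof (intro tprod_sum_span_least subsp_plus_space subsp_tprod_span ballI,
    fold inv_ideal_def, rule subsp_inv_ideal)
  fix n a b assume n: "n \<in> {1..<Suc K}" and a: "a \<in> IV (take (Suc n) vs)" and b: "b \<in> PS (drop n vs)"
  show "tprod n a b \<in> plus_space (inv_ideal vs K) (tprod_span K R (PS (drop K vs)))"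
  proof (cases "n = K")
    case True
    obtain f c where "f \<in> R" "c \<in> CP (take (Suc K) vs)" "a = (\<lambda>x. f x + c x)"
      using is_irr_spaceD(4)[OF assms(3)] a True by blast
    then have "tprod n a b = (\<lambda>x. tprod K c b x + tprod K f b x)"
      using True by (simp add: tprod_def algebra_simps)
    then show ?thesis
      using \<open>f \<in> R\<close> \<open>c \<in> CP _\<close> b True assms(2)
      by (auto intro!: plus_spaceI tprod_composite_in_inv_ideal tprod_in_tprod_span)
  next
    case False
    then have "tprod n a b \<in> inv_ideal vs K" using n a b by (intro tprod_in_inv_ideal) auto
    from plus_spaceI[OF this subsp_zero[OF subsp_tprod_span]] show ?thesis by simp
  qed
qed

lemma inv_ideal_eq_zero_if_rslices:
  assumes "K < length vs" "\<forall>r\<in>R. r \<in> inv_ideal (take (Suc K) vs) K \<longrightarrow> r = (\<lambda>x. 0)"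
    "f \<in> inv_ideal vs K" "\<forall>z. rslice K z f \<in> R"
  shows "f = (\<lambda>x. 0)"
proof (rule eq_zero_if_rslices_zero)
  have "f \<in> degree_space (length vs - 1)"
    using inv_ideal_subset_pspace[OF assms(1)] pspace_subset_degree_space assms(3) by blast
  then show "\<forall>x. length x < K \<longrightarrow> f x = 0"
    using assms(1) unfolding degree_space_def by auto
  show "\<forall>z. rslice K z f = (\<lambda>x. 0)"
    using assms(2,4) rslice_inv_ideal[OF assms(1,3)] by blast
qed

(* The usual argument that (B \<otimes> R)^G = B^G \<otimes> R for a space R of invariants:
   write the element with linearly independent first factors and compare coefficients. *)

lemma fixed_in_tprod_span_invariants:
  assumes "R \<subseteq> degree_space K" "\<forall>r\<in>R. \<forall>g\<in>G. act g r = r"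
    "U \<in> tprod_span K R (PS ws)" "\<forall>g\<in>G. act g U = U"
  shows "U \<in> tprod_span K R (IV ws)"
proof -
  obtain I :: "nat set" and r b
    where I: "finite I" "lin_independent I r" "\<forall>i\<in>I. r i \<in> R \<and> b i \<in> PS ws"
    and U: "U = (\<lambda>x. \<Sum>i\<in>I. tprod K (r i) (b i) x)"
    using assms(3) subsp_pspace by (rule tprod_span_independent_repr)
  have r_deg: "\<forall>i\<in>I. r i \<in> degree_space K" using I(3) assms(1) by blast
  have "act g (b i) = b i" if g: "g \<in> G" and i: "i \<in> I" for g i
  proof
    fix z
    have aU: "act g U = (\<lambda>x. \<Sum>i\<in>I. tprod K (r i) (act g (b i)) x)"
      unfolding U using assms(2) I(3) g
      by (simp add: linear_map_sum[OF linear_map_gact] gact_tprod)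
    have "rslice K z (act g U) = rslice K z U" using assms(4) g by simp
    then have "(\<lambda>x. \<Sum>i\<in>I. act g (b i) z * r i x) = (\<lambda>x. \<Sum>i\<in>I. b i z * r i x)"
      unfolding aU unfolding U rslice_sum_tprod[OF r_deg] .
    then have "(\<lambda>x. \<Sum>i\<in>I. (act g (b i) z - b i z) * r i x) = (\<lambda>x. 0)"
      by (simp add: fun_eq_iff left_diff_distrib sum_subtractf)
    from lin_independentD[OF I(2) this i] show "act g (b i) z = b i z" by simp
  qed
  then have "\<forall>i\<in>I. b i \<in> IV ws" using I(3) by (simp add: invariants_iff)
  then show ?thesis
    unfolding U using I(3)
    by (intro subsp_sum[OF subsp_tprod_span] ballI) (auto intro: tprod_in_tprod_span)
qed

lemma tprod_span_fixed_modulo_inv_ideal: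
  assumes "K < length vs" "subsp R" "R \<subseteq> IV (take (Suc K) vs)"
    "\<forall>r\<in>R. r \<in> inv_ideal (take (Suc K) vs) K \<longrightarrow> r = (\<lambda>x. 0)"
    "U \<in> tprod_span K R (PS (drop K vs))" "\<forall>g\<in>G. (\<lambda>x. act g U x - U x) \<in> inv_ideal vs K"
  shows "U \<in> tprod_span K R (IV (drop K vs))"
proof (rule fixed_in_tprod_span_invariants[OF _ _ assms(5)])
  show R_deg: "R \<subseteq> degree_space K"
    using assms(1,3) invariants_subset_degree_space[of "take (Suc K) vs"] by auto
  show R_fix: "\<forall>r\<in>R. \<forall>g\<in>G. act g r = r" using assms(3) by (auto simp: invariants_iff)
  show "\<forall>g\<in>G. act g U = U"
  proof
    fix g assume g: "g \<in> G"
    have "act g U \<in> tprod_span K R (PS (drop K vs))"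
      using assms(5)
    proof (rule tprod_span_linear_map[OF linear_map_gact subsp_tprod_span, rotated], intro ballI)
      fix r b assume "r \<in> R" "b \<in> PS (drop K vs)"
      then show "act g (tprod K r b) \<in> tprod_span K R (PS (drop K vs))"
        using R_fix g by (simp add: gact_tprod gact_pspace tprod_in_tprod_span)
    qed
    then have "\<forall>z. rslice K z (\<lambda>x. act g U x - U x) \<in> R"
      using assms(2,5) R_deg
      by (simp add: linear_map_diff[OF linear_map_rslice] subsp_diff rslice_tprod_span)
    then have "(\<lambda>x. act g U x - U x) = (\<lambda>x. 0)"
      using inv_ideal_eq_zero_if_rslices[OF assms(1,4)] assms(6) g by blast
    then show "act g U = U" by (simp add: fun_eq_iff)
  qed
qed

lemma irr_space_inter_inv_ideal:
  assumes "is_irr_space src tgt G ws R" "IV ws \<inter> inv_ideal ws K \<subseteq> CP ws"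
  shows "\<forall>r\<in>R. r \<in> inv_ideal ws K \<longrightarrow> r = (\<lambda>x. 0)"
  using is_irr_spaceD(2,3)[OF assms(1)] assms(2) by blast

lemma gact_diff_in_inv_ideal:
  assumes "y \<in> IV vs" "w \<in> inv_ideal vs K" "y = (\<lambda>x. w x + U x)" "g \<in> G"
  shows "(\<lambda>x. act g U x - U x) \<in> inv_ideal vs K"
proof -
  have "(\<lambda>x. act g w x + act g U x) = (\<lambda>x. w x + U x)"
    using assms linear_map_add[OF linear_map_gact[of src tgt g], of w U] by (simp add: invariants_iff)
  then have "(\<lambda>x. act g U x - U x) = (\<lambda>x. w x - act g w x)"
    by (simp add: fun_eq_iff eq_diff_eq add_diff_eq add.commute)
  then show ?thesis
    using subsp_diff[OF subsp_inv_ideal assms(2) gact_inv_ideal[OF assms(4,2)]] by simp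
qed

(* Induction on K: modulo the ideal for K, an element of the ideal for K + 1 has irreducible
   first factors on K arrows; such an element is invariant and hence composite. *)

lemma invariants_inter_inv_ideal_composite_upto:
  assumes irr: "irr_subpaths irr vs"
    and prefixes: "\<And>K. 1 \<le> K \<Longrightarrow> K < length vs - 1 \<Longrightarrow>
      IV (take (Suc K) vs) \<inter> inv_ideal (take (Suc K) vs) K \<subseteq> CP (take (Suc K) vs)"
  shows "K \<le> length vs - 1 \<Longrightarrow> y \<in> IV vs \<Longrightarrow> y \<in> inv_ideal vs K \<Longrightarrow> y \<in> CP vs"
proof (induction K arbitrary: y)
  case (Suc K)
  show ?case
  proof (cases "K = 0")
    case False
    then have K: "1 \<le> K" "K < length vs - 1" using Suc.prems(1) by auto
    let ?R = "irr (take (Suc K) vs)"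
    have irrK: "is_irr_space src tgt G (take (Suc K) vs) ?R"
      using irr_subpaths_prefix[OF irr K(1)] K(2) by simp
    have "K < length vs" using K(2) by simp
    obtain w U where y: "y = (\<lambda>x. w x + U x)" and w: "w \<in> inv_ideal vs K"
      and U: "U \<in> tprod_span K ?R (PS (drop K vs))"
      using subsetD[OF inv_ideal_Suc[OF K(1) \<open>K < length vs\<close> irrK] Suc.prems(3)]
      by (rule plus_spaceE)
    have "\<forall>g\<in>G. (\<lambda>x. act g U x - U x) \<in> inv_ideal vs K"
      using gact_diff_in_inv_ideal[OF Suc.prems(2) w y] by blast
    then have "U \<in> tprod_span K ?R (IV (drop K vs))"
      using tprod_span_fixed_modulo_inv_ideal[OF _ is_irr_spaceD(1,2)[OF irrK] _ U] K
        irr_space_inter_inv_ideal[OF irrK prefixes[OF K]] by simp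
    then have "U \<in> CP vs"
      using tprod_span_mono[OF is_irr_spaceD(2)[OF irrK] order.refl] tprod_span_subset_composite K
      by fastforce
    moreover have "w \<in> CP vs"
    proof (rule Suc.IH)
      show "w \<in> IV vs"
        using subsp_diff[OF subsp_invariants Suc.prems(2)
            composite_subset_invariants[THEN subsetD, OF \<open>U \<in> CP vs\<close>]]
        by (simp add: y)
    qed (use Suc.prems(1) w in auto)
    ultimately show ?thesis unfolding y using subsp_add[OF subsp_composite] by blast
  qed (use Suc.prems inv_ideal_trivial subsp_zero[OF subsp_composite] in auto)
qed (use inv_ideal_trivial subsp_zero[OF subsp_composite] in auto)

theorem invariants_inter_inv_ideal_composite:
  "irr_subpaths irr vs \<Longrightarrow> IV vs \<inter> inv_ideal vs (length vs - 1) \<subseteq> CP vs"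
proof (induction "length vs" arbitrary: vs rule: less_induct)
  case less
  have "IV (take (Suc K) vs) \<inter> inv_ideal (take (Suc K) vs) K \<subseteq> CP (take (Suc K) vs)"
    if "1 \<le> K" "K < length vs - 1" for K
    using less.hyps[of "take (Suc K) vs"] irr_subpaths_take[OF less.prems] that by simp
  then show ?case using invariants_inter_inv_ideal_composite_upto[OF less.prems] by blast
qed

corollary irr_subpaths_inter_inv_ideal:
  assumes "irr_subpaths irr vs" "1 \<le> K" "K < length vs"
  shows "\<forall>r\<in>irr (take (Suc K) vs). r \<in> inv_ideal (take (Suc K) vs) K \<longrightarrow> r = (\<lambda>x. 0)"
  using irr_space_inter_inv_ideal[OF irr_subpaths_prefix[OF assms]]
    invariants_inter_inv_ideal_composite[OF irr_subpaths_take[OF assms(1)], of K] assms(3)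
  by simp

section \<open>Splitting off the first irreducible factor\<close>

lemma composite_subset_irr_first_factor:
  assumes "irr_subpaths irr vs"
  shows "CP vs \<subseteq> tprod_sum_span {1..<length vs - 1} (\<lambda>n. irr (take (Suc n) vs)) (\<lambda>n. IV (drop n vs))"
    (is "_ \<subseteq> ?S")
proof -
  have claim: "tprod_span n (IV (take (Suc n) vs)) (IV (drop n vs)) \<subseteq> ?S"
    if "n \<in> {1..<length vs - 1}" for n
    using that
  proof (induction n rule: less_induct)
    case (less n)
    have irrn: "is_irr_space src tgt G (take (Suc n) vs) (irr (take (Suc n) vs))"
      using irr_subpaths_prefix[OF assms] less.prems by auto
    show ?case
    proof (intro tprod_span_least subsp_tprod_sum_span ballI)
      fix a b assume a: "a \<in> IV (take (Suc n) vs)" and b: "b \<in> IV (drop n vs)"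
      obtain f c where f: "f \<in> irr (take (Suc n) vs)" and c: "c \<in> CP (take (Suc n) vs)"
        and "a = (\<lambda>x. f x + c x)"
        using is_irr_spaceD(4)[OF irrn a] by blast
      then have "tprod n a b = (\<lambda>x. tprod n f b x + tprod n c b x)"
        by (simp add: tprod_def distrib_right)
      moreover have "tprod n f b \<in> ?S"
        using f b less.prems by (intro tprod_in_tprod_sum_span)
      moreover have "tprod n c b \<in> ?S"
      proof (rule tprod_composite_in_subspace[OF _ c subsp_tprod_sum_span])
        fix n' a' d assume n': "n' \<in> {1..<n}" and a': "a' \<in> IV (take (Suc n') vs)"
          and d: "d \<in> IV (take (Suc (n - n')) (drop n' vs))"
        have "tprod (n - n') d b \<in> IV (drop n' vs)"
          using d b n' less.prems by (intro tprod_invariants) auto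
        then show "tprod n' a' (tprod (n - n') d b) \<in> ?S"
          using less.IH[of n'] n' less.prems a' by (auto intro: tprod_in_tprod_span)
      qed (use less.prems in auto)
      ultimately show "tprod n a b \<in> ?S" by (simp add: subsp_add[OF subsp_tprod_sum_span])
    qed
  qed
  show ?thesis
    unfolding composite_eq
  proof (intro tprod_sum_span_least subsp_tprod_sum_span ballI)
    fix n a b assume "n \<in> {1..<length vs - 1}" "a \<in> IV (take (Suc n) vs)" "b \<in> IV (drop n vs)"
    then show "tprod n a b \<in> ?S" using subsetD[OF claim tprod_in_tprod_span] by blast
  qed
qed

(* The summand with the largest n lies in the ideal generated by the shorter invariants,
   while its slices are irreducible; so it vanishes. *)
lemma irr_first_factors_independent:
  assumes "irr_subpaths irr vs" "N < length vs"
    "\<forall>n\<in>{1..<N}. w n \<in> inv_ideal vs (Suc n)"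
    "\<forall>n\<in>{1..N}. \<forall>z. rslice n z (w n) \<in> irr (take (Suc n) vs)"
    "(\<lambda>x. \<Sum>n\<in>{1..N}. w n x) = (\<lambda>x. 0)"
  shows "\<forall>n\<in>{1..N}. w n = (\<lambda>x. 0)"
  using assms(2-)
proof (induction N)
  case (Suc N)
  have "w n \<in> inv_ideal vs (Suc N)" if "n \<in> {1..N}" for n
  proof -
    have "w n \<in> inv_ideal vs (Suc n)" using Suc.prems(2) that by auto
    moreover have "inv_ideal vs (Suc n) \<subseteq> inv_ideal vs (Suc N)"
      using that by (intro inv_ideal_mono) auto
    ultimately show ?thesis by blast
  qed
  then have lower: "(\<lambda>x. \<Sum>n\<in>{1..N}. w n x) \<in> inv_ideal vs (Suc N)"
    by (intro subsp_sum[OF subsp_inv_ideal]) auto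
  have "w (Suc N) = (\<lambda>x. - (\<Sum>n\<in>{1..N}. w n x))"
    using Suc.prems(4) by (simp add: fun_eq_iff eq_neg_iff_add_eq_0 add.commute)
  then have "w (Suc N) \<in> inv_ideal vs (Suc N)"
    using subsp_neg[OF subsp_inv_ideal lower] by simp
  then have top: "w (Suc N) = (\<lambda>x. 0)"
    using inv_ideal_eq_zero_if_rslices[OF Suc.prems(1) irr_subpaths_inter_inv_ideal[OF assms(1)]]
      Suc.prems(1,3) by simp
  have "\<forall>n\<in>{1..N}. w n = (\<lambda>x. 0)"
    using Suc.prems top by (intro Suc.IH) auto
  then show ?case using top by (auto simp: le_Suc_eq)
qed simp

definition irr_first_factor_space :: "('v list \<Rightarrow> ('a list \<Rightarrow> 'k) set) \<Rightarrow> 'v list \<Rightarrow> nat \<Rightarrow>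
    ('a list \<Rightarrow> 'k) set" where
  "irr_first_factor_space irr vs n = (if n = length vs - 1 then irr vs
     else tprod_span n (irr (take (Suc n) vs)) (IV (drop n vs)))"

lemma subsp_irr_first_factor_space:
  "irr_subpaths irr vs \<Longrightarrow> 2 \<le> length vs \<Longrightarrow> subsp (irr_first_factor_space irr vs n)"
  using is_irr_spaceD(1)[OF irr_subpaths_prefix, of irr vs "length vs - 1"]
  by (simp add: irr_first_factor_space_def subsp_tprod_span)

lemma irr_first_factor_space_subset_invariants:
  assumes "irr_subpaths irr vs" "n \<in> {1..length vs - 1}"
  shows "irr_first_factor_space irr vs n \<subseteq> IV vs"
proof (cases "n = length vs - 1")
  case False
  then have "n \<in> {1..<length vs - 1}" using assms(2) by auto
  then show ?thesis
    using is_irr_spaceD(2)[OF irr_subpaths_prefix[OF assms(1)]] False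
      tprod_span_mono[of "irr (take (Suc n) vs)" "IV (take (Suc n) vs)"] tprod_span_subset_composite
      composite_subset_invariants
    by (fastforce simp: irr_first_factor_space_def)
next
  case True
  have "1 \<le> length vs - 1" "length vs - 1 < length vs" using assms(2) by auto
  then have "is_irr_space src tgt G vs (irr vs)"
    using irr_subpaths_prefix[OF assms(1)] by fastforce
  then show ?thesis using True is_irr_spaceD(2) by (simp add: irr_first_factor_space_def)
qed

lemma invariants_subset_irr_first_factor_spaces:
  assumes irr: "irr_subpaths irr vs" and len: "2 \<le> length vs"
  shows "IV vs \<subseteq> sum_space {1..length vs - 1} (irr_first_factor_space irr vs)"
proof
  let ?m = "length vs - 1"
  fix y assume "y \<in> IV vs"
  have "is_irr_space src tgt G vs (irr vs)"
    using irr_subpaths_prefix[OF irr, of ?m] len by simp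
  then obtain f c where f: "f \<in> irr vs" and c: "c \<in> CP vs" and y: "y = (\<lambda>x. f x + c x)"
    using is_irr_spaceD(4) \<open>y \<in> IV vs\<close> by blast
  have "c \<in> sum_space {1..<?m} (\<lambda>n. tprod_span n (irr (take (Suc n) vs)) (IV (drop n vs)))"
    using composite_subset_irr_first_factor[OF irr] c
      lspan_UN_subset_sum_space[of "{1..<?m}"
        "\<lambda>n. tprod_span n (irr (take (Suc n) vs)) (IV (drop n vs))"]
    unfolding tprod_sum_span_def by (auto simp: subsp_tprod_span)
  then obtain v where v: "c = (\<lambda>x. \<Sum>n\<in>{1..<?m}. v n x)"
    "\<forall>n\<in>{1..<?m}. v n \<in> tprod_span n (irr (take (Suc n) vs)) (IV (drop n vs))"
    by (rule sum_spaceE)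
  have N: "{1..?m} = insert ?m {1..<?m}" using len by auto
  have "y = (\<lambda>x. \<Sum>n\<in>{1..?m}. (v(?m := f)) n x)"
    unfolding y v(1) N by (simp add: add.commute)
  moreover have "\<forall>n\<in>{1..?m}. (v(?m := f)) n \<in> irr_first_factor_space irr vs n"
    using v(2) f N by (auto simp: irr_first_factor_space_def)
  ultimately show "y \<in> sum_space {1..?m} (irr_first_factor_space irr vs)" by (simp add: sum_spaceI)
qed

lemma independent_irr_first_factor_spaces:
  assumes irr: "irr_subpaths irr vs" and len: "2 \<le> length vs"
  shows "independent_spaces {1..length vs - 1} (irr_first_factor_space irr vs)"
  unfolding independent_spaces_def
proof (intro allI impI)
  let ?m = "length vs - 1"
  fix w assume w: "\<forall>n\<in>{1..?m}. w n \<in> irr_first_factor_space irr vs n"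
    and sum: "(\<lambda>x. \<Sum>n\<in>{1..?m}. w n x) = (\<lambda>x. 0)"
  have R: "irr (take (Suc n) vs) \<subseteq> IV (take (Suc n) vs)" "subsp (irr (take (Suc n) vs))"
    and R_deg: "irr (take (Suc n) vs) \<subseteq> degree_space n" if "n \<in> {1..?m}" for n
    using is_irr_spaceD(1,2)[OF irr_subpaths_prefix[OF irr, of n]] invariants_subset_degree_space
      that by fastforce+
  have low: "w n \<in> tprod_span n (irr (take (Suc n) vs)) (IV (drop n vs))" if "n \<in> {1..<?m}" for n
    using w[rule_format, of n] that by (simp add: irr_first_factor_space_def)
  show "\<forall>n\<in>{1..?m}. w n = (\<lambda>x. 0)"
  proof (rule irr_first_factors_independent[OF irr _ _ _ sum])
    show "\<forall>n\<in>{1..<?m}. w n \<in> inv_ideal vs (Suc n)"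
    proof
      fix n assume n: "n \<in> {1..<?m}"
      have "tprod_span n (irr (take (Suc n) vs)) (IV (drop n vs))
          \<subseteq> tprod_span n (IV (take (Suc n) vs)) (PS (drop n vs))"
        using R(1)[of n] n by (intro tprod_span_mono) (auto simp: invariants_iff)
      then show "w n \<in> inv_ideal vs (Suc n)"
        using low[OF n] tprod_span_subset_inv_ideal[of n "Suc n" vs] n by auto
    qed
    show "\<forall>n\<in>{1..?m}. \<forall>z. rslice n z (w n) \<in> irr (take (Suc n) vs)"
    proof (intro ballI allI)
      fix n z assume n: "n \<in> {1..?m}"
      show "rslice n z (w n) \<in> irr (take (Suc n) vs)"
      proof (cases "n = ?m")
        case True
        then have "w n \<in> irr (take (Suc n) vs)"
          using w[rule_format, OF n] len by (simp add: irr_first_factor_space_def)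
        then show ?thesis
          using R_deg[OF n] subsp_zero[OF R(2)[OF n]] by (auto simp: rslice_degree_space)
      next
        case False
        then have "n \<in> {1..<?m}" using n by auto
        then show ?thesis using rslice_tprod_span[OF R(2)[OF n] R_deg[OF n] low] by blast
      qed
    qed
  qed (use len in auto)
qed

lemma invariants_first_factor_direct_sum:
  assumes "irr_subpaths irr vs" "2 \<le> length vs"
  shows "direct_sum {1..length vs - 1} (irr_first_factor_space irr vs) (IV vs)"
proof -
  have "sum_space {1..length vs - 1} (irr_first_factor_space irr vs) \<subseteq> IV vs"
  proof
    fix y assume "y \<in> sum_space {1..length vs - 1} (irr_first_factor_space irr vs)"
    then obtain w where "y = (\<lambda>x. \<Sum>n\<in>{1..length vs - 1}. w n x)"
      "\<forall>n\<in>{1..length vs - 1}. w n \<in> irr_first_factor_space irr vs n"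
      by (rule sum_spaceE)
    then show "y \<in> IV vs"
      using irr_first_factor_space_subset_invariants[OF assms(1)]
      by (blast intro: subsp_sum[OF subsp_invariants])
  qed
  then show ?thesis
    unfolding direct_sum_def
    using invariants_subset_irr_first_factor_spaces[OF assms]
      independent_irr_first_factor_spaces[OF assms] subsp_irr_first_factor_space[OF assms]
    by blast
qed

lemma irr_prod_single:
  assumes "irr_subpaths irr vs" "2 \<le> length vs"
  shows "irr_prod vs irr [length vs - 1] = irr vs"
proof -
  have irrv: "is_irr_space src tgt G vs (irr vs)"
    using irr_subpaths_prefix[OF assms(1), of "length vs - 1"] assms(2) by simp
  have "tprodl [length vs - 1] [f] = f" if "f \<in> irr vs" for f
    using that is_irr_spaceD(2)[OF irrv] invariants_subset_degree_space
    by (intro tprodl_single) blast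
  moreover have "seg vs 0 (length vs - 1) = vs" using assms(2) by (simp add: seg_def)
  ultimately have "{tprodl [length vs - 1] fs | fs. length fs = length [length vs - 1] \<and>
      (\<forall>t<length [length vs - 1]. fs ! t \<in> irr (seg vs (sum_list (take t [length vs - 1]))
        ([length vs - 1] ! t)))} = irr vs"
    by (auto simp: length_Suc_conv) (metis nth_Cons_0 length_Cons list.size(3))
  then show ?thesis
    unfolding irr_prod_def using lspan_eq[OF is_irr_spaceD(1)[OF irrv]] by simp
qed

lemma irr_prod_Cons:
  assumes "irr_subpaths irr vs" "n \<in> {1..<length vs - 1}"
  shows "irr_prod vs irr (n # p) = tprod_span n (irr (take (Suc n) vs)) (irr_prod (drop n vs) irr p)"
proof -
  let ?gen = "\<lambda>ws ps. {tprodl ps fs | fs. length fs = length ps \<and>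
      (\<forall>t<length ps. fs ! t \<in> irr (seg ws (sum_list (take t ps)) (ps ! t)))}"
  have seg: "seg vs (n + s) k = seg (drop n vs) s k" for s k
    by (simp add: seg_def add.commute)
  have seg0: "seg vs 0 n = take (Suc n) vs" by (simp add: seg_def)
  have "?gen vs (n # p) = {tprod n a b | a b. a \<in> irr (take (Suc n) vs) \<and> b \<in> ?gen (drop n vs) p}"
  proof (intro set_eqI iffI)
    fix x assume "x \<in> ?gen vs (n # p)"
    then obtain f fs where "x = tprod n f (tprodl p fs)" "f \<in> irr (take (Suc n) vs)"
      "length fs = length p"
      "\<forall>t<length p. fs ! t \<in> irr (seg (drop n vs) (sum_list (take t p)) (p ! t))"
      by (auto simp: length_Suc_conv All_less_Suc2 tprodl_Cons seg seg0)
    then show "x \<in> {tprod n a b | a b. a \<in> irr (take (Suc n) vs) \<and> b \<in> ?gen (drop n vs) p}"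
      by blast
  next
    fix x assume "x \<in> {tprod n a b | a b. a \<in> irr (take (Suc n) vs) \<and> b \<in> ?gen (drop n vs) p}"
    then obtain f fs where "x = tprodl (n # p) (f # fs)" "f \<in> irr (take (Suc n) vs)"
      "length fs = length p"
      "\<forall>t<length p. fs ! t \<in> irr (seg (drop n vs) (sum_list (take t p)) (p ! t))"
      by (auto simp: tprodl_Cons)
    then show "x \<in> ?gen vs (n # p)"
      by (intro CollectI exI[of _ "f # fs"]) (simp add: All_less_Suc2 seg seg0)
  qed
  then have "irr_prod vs irr (n # p) = tprod_span n (irr (take (Suc n) vs)) (?gen (drop n vs) p)"
    unfolding irr_prod_def tprod_span_def by simp
  also have "\<dots> = tprod_span n (lspan (irr (take (Suc n) vs))) (lspan (?gen (drop n vs) p))"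
    by (rule tprod_span_lspan[symmetric])
  also have "\<dots> = tprod_span n (irr (take (Suc n) vs)) (irr_prod (drop n vs) irr p)"
    using lspan_eq[OF is_irr_spaceD(1)[OF irr_subpaths_prefix[OF assms(1)]]] assms(2)
    unfolding irr_prod_def by auto
  finally show ?thesis .
qed

theorem irr_prod_direct_sum:
  assumes "irr_subpaths irr vs" "2 \<le> length vs"
  shows "direct_sum (ord_partitions (length vs - 1)) (irr_prod vs irr) (IV vs)"
  using assms
proof (induction "length vs" arbitrary: vs rule: less_induct)
  case less
  let ?m = "length vs - 1"
  have "direct_sum (ord_partitions (?m - n)) (\<lambda>p. irr_prod vs irr (n # p))
      (tprod_span n (irr (take (Suc n) vs)) (IV (drop n vs)))"
    if n: "n \<in> {1..<?m}" for n
  proof -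
    have "direct_sum (ord_partitions (?m - n)) (irr_prod (drop n vs) irr) (IV (drop n vs))"
      using less.hyps[of "drop n vs"] irr_subpaths_drop[OF less.prems(1)] n by auto
    moreover have "irr (take (Suc n) vs) \<subseteq> degree_space n"
      using is_irr_spaceD(2)[OF irr_subpaths_prefix[OF less.prems(1)]]
        invariants_subset_degree_space n by fastforce
    ultimately show ?thesis
      using direct_sum_tprod_span irr_prod_Cons[OF less.prems(1) n] by simp
  qed
  then show ?case
    using direct_sum_by_first_part[OF _ invariants_first_factor_direct_sum[OF less.prems]]
      irr_prod_single[OF less.prems] less.prems(2)
    by (simp add: irr_first_factor_space_def)
qed

end

theorem mainTheorem3:
  fixes src tgt :: "'a \<Rightarrow> 'v"
    and G :: "('a \<Rightarrow> 'a \<Rightarrow> 'k::field) set"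
    and vs :: "'v list"
    and irr :: "'v list \<Rightarrow> ('a list \<Rightarrow> 'k) set"
  assumes "\<forall>i j. finite {a. src a = i \<and> tgt a = j}"
    and "homog_group src tgt G"
    and "is_path_space src tgt vs"
    and "\<forall>s n. 1 \<le> n \<and> s + n < length vs \<longrightarrow>
           is_irr_space src tgt G (seg vs s n) (irr (seg vs s n))"
  shows "bij_betw (\<lambda>y x. \<Sum>p\<in>ord_partitions (length vs - 1). y p x)
           (PiE (ord_partitions (length vs - 1)) (irr_prod vs irr))
           (invariants src tgt G vs)"
proof -
  interpret quiver_action src tgt G .
  have "2 \<le> length vs" using assms(3) by (simp add: is_path_space_def)
  moreover have "irr_subpaths irr vs" using assms(4) by (simp add: irr_subpaths_def)
  ultimately show ?thesis by (intro direct_sum_bij_betw irr_prod_direct_sum)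
qed

end
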